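(* Let $A$ and $B$ be unital Banach algebras (over $\mathbb{R}$ or $\mathbb{C}$) with $A$ finite-dimensional, and let $\varphi\colon A\to B$ be a continuous unital algebra morphism. (1) If $\varphi$ annihilates the Jacobson radical $\operatorname{rad}A$, then the orbit of $\varphi$ under conjugation by $B^\times$ (i.e. $\{u\varphi u^{-1}:u\in B^\times\}$) is closed in the space $\mathbf{BAlg}(A,B)$ of continuous unital algebra morphisms $A\to B$. (2) Conversely, if $B$ is finite-dimensional and semisimple and the $B^\times$-orbit of $\varphi$ is closed, then $\varphi$ annihilates $\operatorname{rad}A$.
   Context: Unital Banach algebras satisfy $\|1\|=1$; $\mathbf{BAlg}(A,B)$ carries the topology induced by the operator norm on bounded linear maps $A\to B$. $B^\times$ is the group of invertible elements of $B$. $\operatorname{rad}A$ is the Jacobson radical (intersection of all maximal left ideals). An algebra is semisimple if it is a finite product of matrix algebras over division rings. *)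

theory Defs
  imports "HOL-Analysis.Analysis" "HOL-Algebra.Ring"
begin

definition left_ideal :: "'a::ring_1 set \<Rightarrow> bool" where
  "left_ideal I \<longleftrightarrow> 0 \<in> I \<and> (\<forall>x\<in>I. \<forall>y\<in>I. x + y \<in> I) \<and> (\<forall>a. \<forall>x\<in>I. a * x \<in> I)"

definition maximal_left_ideal :: "'a::ring_1 set \<Rightarrow> bool" where
  "maximal_left_ideal I \<longleftrightarrow> left_ideal I \<and> I \<noteq> UNIV \<and>
     (\<forall>J. left_ideal J \<and> I \<subseteq> J \<and> J \<noteq> UNIV \<longrightarrow> J = I)"

definition jacobson_radical :: "'a::ring_1 set" where
  "jacobson_radical = \<Inter>{I. maximal_left_ideal I}"

definition invertible_elem :: "'a::ring_1 \<Rightarrow> bool" where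
  "invertible_elem u \<longleftrightarrow> (\<exists>v. u * v = 1 \<and> v * u = 1)"

definition finite_dim_space :: "'a::real_vector itself \<Rightarrow> bool" where
  "finite_dim_space _ \<longleftrightarrow> (\<exists>S::'a set. finite S \<and> span S = UNIV)"

definition division_ring_struct :: "('c, 'm) ring_scheme \<Rightarrow> bool" where
  "division_ring_struct D \<longleftrightarrow> ring D \<and> \<one>\<^bsub>D\<^esub> \<noteq> \<zero>\<^bsub>D\<^esub> \<and>
     (\<forall>x \<in> carrier D - {\<zero>\<^bsub>D\<^esub>}. x \<in> Units D)"

text \<open>Elements of \<open>\<Prod>_{i<m} M_{ns i}(D i)\<close>: functions \<open>i \<Rightarrow> j \<Rightarrow> k \<Rightarrow> entry\<close>,
  extensional (undefined outside the index ranges).\<close>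
definition mat_prod_carrier :: "nat \<Rightarrow> (nat \<Rightarrow> nat) \<Rightarrow> (nat \<Rightarrow> 'c ring) \<Rightarrow> (nat \<Rightarrow> nat \<Rightarrow> nat \<Rightarrow> 'c) set" where
  "mat_prod_carrier m ns D = {M. \<forall>i j k. if i < m \<and> j < ns i \<and> k < ns i
      then M i j k \<in> carrier (D i) else M i j k = undefined}"

definition mat_prod_add :: "nat \<Rightarrow> (nat \<Rightarrow> nat) \<Rightarrow> (nat \<Rightarrow> 'c ring) \<Rightarrow>
    (nat \<Rightarrow> nat \<Rightarrow> nat \<Rightarrow> 'c) \<Rightarrow> (nat \<Rightarrow> nat \<Rightarrow> nat \<Rightarrow> 'c) \<Rightarrow> (nat \<Rightarrow> nat \<Rightarrow> nat \<Rightarrow> 'c)" where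
  "mat_prod_add m ns D M N = (\<lambda>i j k. if i < m \<and> j < ns i \<and> k < ns i
      then M i j k \<oplus>\<^bsub>D i\<^esub> N i j k else undefined)"

definition mat_prod_mult :: "nat \<Rightarrow> (nat \<Rightarrow> nat) \<Rightarrow> (nat \<Rightarrow> 'c ring) \<Rightarrow>
    (nat \<Rightarrow> nat \<Rightarrow> nat \<Rightarrow> 'c) \<Rightarrow> (nat \<Rightarrow> nat \<Rightarrow> nat \<Rightarrow> 'c) \<Rightarrow> (nat \<Rightarrow> nat \<Rightarrow> nat \<Rightarrow> 'c)" where
  "mat_prod_mult m ns D M N = (\<lambda>i j k. if i < m \<and> j < ns i \<and> k < ns i
      then finsum (D i) (\<lambda>l. M i j l \<otimes>\<^bsub>D i\<^esub> N i l k) {..<ns i} else undefined)"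

definition mat_prod_one :: "nat \<Rightarrow> (nat \<Rightarrow> nat) \<Rightarrow> (nat \<Rightarrow> 'c ring) \<Rightarrow> (nat \<Rightarrow> nat \<Rightarrow> nat \<Rightarrow> 'c)" where
  "mat_prod_one m ns D = (\<lambda>i j k. if i < m \<and> j < ns i \<and> k < ns i
      then (if j = k then \<one>\<^bsub>D i\<^esub> else \<zero>\<^bsub>D i\<^esub>) else undefined)"

text \<open>The division rings are represented with carriers
  inside \<open>'b\<close>; this is no restriction, since each \<open>D_i\<close> is isomorphic to a corner
  \<open>e B e\<close> of \<open>B\<close> itself.\<close>
definition semisimple :: "'b::ring_1 itself \<Rightarrow> bool" where
  "semisimple _ \<longleftrightarrow> (\<exists>(m::nat) (ns::nat \<Rightarrow> nat) (D::nat \<Rightarrow> 'b ring) (f::'b \<Rightarrow> (nat \<Rightarrow> nat \<Rightarrow> nat \<Rightarrow> 'b)).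
      (\<forall>i<m. division_ring_struct (D i) \<and> 0 < ns i) \<and>
      bij_betw f UNIV (mat_prod_carrier m ns D) \<and>
      (\<forall>x y. f (x + y) = mat_prod_add m ns D (f x) (f y)) \<and>
      (\<forall>x y. f (x * y) = mat_prod_mult m ns D (f x) (f y)) \<and>
      f 1 = mat_prod_one m ns D)"

definition BAlg :: "('a::real_normed_algebra_1 \<Rightarrow>\<^sub>L 'b::real_normed_algebra_1) set" where
  "BAlg = {\<psi>. (\<forall>x y. blinfun_apply \<psi> (x * y) = blinfun_apply \<psi> x * blinfun_apply \<psi> y)
              \<and> blinfun_apply \<psi> 1 = 1}"

definition conj_orbit :: "('a::real_normed_algebra_1 \<Rightarrow>\<^sub>L 'b::real_normed_algebra_1) \<Rightarrow> ('a \<Rightarrow>\<^sub>L 'b) set" where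
  "conj_orbit \<phi> = {\<psi>. \<exists>u v. u * v = 1 \<and> v * u = 1 \<and>
      (\<forall>x. blinfun_apply \<psi> x = u * blinfun_apply \<phi> x * v)}"

end

theory Submission
  imports Defs
begin

lemma left_idealD:
  assumes "left_ideal I"
  shows left_ideal_zero: "0 \<in> I"
    and left_ideal_add: "x \<in> I \<Longrightarrow> y \<in> I \<Longrightarrow> x + y \<in> I"
    and left_ideal_mult_left: "x \<in> I \<Longrightarrow> a * x \<in> I"
  using assms unfolding left_ideal_def by auto

lemma left_ideal_uminus: "left_ideal I \<Longrightarrow> x \<in> I \<Longrightarrow> - x \<in> I"
  using left_ideal_mult_left[of I x "-1"] by simp

lemma left_ideal_diff: "left_ideal I \<Longrightarrow> x \<in> I \<Longrightarrow> y \<in> I \<Longrightarrow> x - y \<in> I"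
  using left_ideal_add[of I x "- y"] left_ideal_uminus[of I y] by simp

lemma left_ideal_sum: "left_ideal I \<Longrightarrow> (\<And>i. i \<in> S \<Longrightarrow> f i \<in> I) \<Longrightarrow> sum f S \<in> I"
  by (induction S rule: infinite_finite_induct) (auto intro: left_idealD)

lemma left_ideal_eq_UNIV: "left_ideal I \<Longrightarrow> 1 \<in> I \<Longrightarrow> I = UNIV"
  using left_ideal_mult_left[of I 1] by force

lemma left_ideal_Inter: "(\<And>I. I \<in> S \<Longrightarrow> left_ideal I) \<Longrightarrow> left_ideal (\<Inter>S)"
  unfolding left_ideal_def by blast

lemma left_ideal_Union_chain:
  assumes "C \<noteq> {}" "subset.chain {I. left_ideal I} C"
  shows "left_ideal (\<Union>C)"
proof -
  have ideals: "\<And>I. I \<in> C \<Longrightarrow> left_ideal I"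
    and comparable: "\<And>I J. I \<in> C \<Longrightarrow> J \<in> C \<Longrightarrow> I \<subseteq> J \<or> J \<subseteq> I"
    using assms(2) by (auto simp: subset.chain_def)
  show ?thesis
    unfolding left_ideal_def
  proof (intro conjI ballI allI)
    show "0 \<in> \<Union>C" using assms(1) ideals left_ideal_zero by blast
  next
    fix x y assume "x \<in> \<Union>C" "y \<in> \<Union>C"
    then obtain I J where "I \<in> C" "J \<in> C" "x \<in> I" "y \<in> J" by blast
    with comparable[of I J] ideals show "x + y \<in> \<Union>C"
      by (metis UnionI left_ideal_add subsetD)
  next
    fix a x assume "x \<in> \<Union>C"
    with ideals show "a * x \<in> \<Union>C" by (blast intro: left_ideal_mult_left)
  qed
qed

lemma maximal_left_idealD:
  assumes "maximal_left_ideal M"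
  shows maximal_left_ideal_left_ideal: "left_ideal M"
    and maximal_left_ideal_one: "1 \<notin> M"
  using assms left_ideal_eq_UNIV unfolding maximal_left_ideal_def by blast+

lemma maximal_left_ideal_exists:
  fixes K :: "'a::ring_1 set"
  assumes "left_ideal K" "1 \<notin> K"
  shows "\<exists>M. maximal_left_ideal M \<and> K \<subseteq> M"
proof -
  define P where "P = {I. left_ideal I \<and> K \<subseteq> I \<and> (1::'a) \<notin> I}"
  have "\<exists>M\<in>P. \<forall>I\<in>P. M \<subseteq> I \<longrightarrow> I = M"
  proof (rule Zorn_Lemma2, intro ballI)
    fix C assume C: "C \<in> chains P"
    show "\<exists>U\<in>P. \<forall>I\<in>C. I \<subseteq> U"
    proof (cases "C = {}")
      case True
      then show ?thesis using assms by (auto simp: P_def)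
    next
      case False
      have "subset.chain {I. left_ideal I} C"
        using C by (auto simp: chains_def chain_subset_def subset.chain_def P_def)
      then have "left_ideal (\<Union>C)" by (rule left_ideal_Union_chain[OF False])
      moreover have "K \<subseteq> \<Union>C" "1 \<notin> \<Union>C" using C False by (auto simp: P_def chains_def)
      ultimately show ?thesis by (intro bexI[of _ "\<Union>C"]) (auto simp: P_def)
    qed
  qed
  then obtain M where "M \<in> P" and M_max: "\<And>I. I \<in> P \<Longrightarrow> M \<subseteq> I \<Longrightarrow> I = M" by blast
  then have "maximal_left_ideal M"
    unfolding maximal_left_ideal_def P_def using left_ideal_eq_UNIV by blast
  with \<open>M \<in> P\<close> show ?thesis by (auto simp: P_def)
qed

lemma left_invertible_if_not_in_maximal_left_ideal:
  fixes z :: "'a::ring_1"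
  assumes "\<And>M. maximal_left_ideal M \<Longrightarrow> z \<notin> M"
  shows "\<exists>v. v * z = 1"
proof (rule ccontr)
  assume no_inverse: "\<nexists>v. v * z = 1"
  have "left_ideal (range (\<lambda>a. a * z))"
    unfolding left_ideal_def
    by (auto simp: mult.assoc intro: range_eqI[of _ _ 0])
       (metis distrib_right rangeI, metis mult.assoc rangeI)
  moreover have "1 \<notin> range (\<lambda>a. a * z)" using no_inverse by auto
  ultimately obtain M where "maximal_left_ideal M" "range (\<lambda>a. a * z) \<subseteq> M"
    using maximal_left_ideal_exists by blast
  with assms show False by (metis mult_1_left rangeI subsetD)
qed

lemma left_ideal_jacobson_radical: "left_ideal (jacobson_radical :: 'a::ring_1 set)"
  unfolding jacobson_radical_def
  by (rule left_ideal_Inter) (auto simp: maximal_left_ideal_def)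

lemma jacobson_radical_zero: "0 \<in> jacobson_radical"
  and jacobson_radical_add: "x \<in> jacobson_radical \<Longrightarrow> y \<in> jacobson_radical \<Longrightarrow> x + y \<in> jacobson_radical"
  and jacobson_radical_mult_left: "x \<in> jacobson_radical \<Longrightarrow> a * x \<in> jacobson_radical"
  and jacobson_radical_uminus: "x \<in> jacobson_radical \<Longrightarrow> - x \<in> jacobson_radical"
  and jacobson_radical_diff: "x \<in> jacobson_radical \<Longrightarrow> y \<in> jacobson_radical \<Longrightarrow> x - y \<in> jacobson_radical"
  by (simp_all add: left_ideal_jacobson_radical left_idealD left_ideal_uminus left_ideal_diff)

lemma jacobson_radical_scaleR:
  "(x::'a::real_algebra_1) \<in> jacobson_radical \<Longrightarrow> c *\<^sub>R x \<in> jacobson_radical"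
  using jacobson_radical_mult_left[of x "of_real c"] by (simp add: scaleR_conv_of_real)

lemma one_minus_jacobson_radical_left_invertible:
  fixes j :: "'a::ring_1"
  assumes "j \<in> jacobson_radical"
  shows "\<exists>v. v * (1 - j) = 1"
proof (rule left_invertible_if_not_in_maximal_left_ideal)
  fix M :: "'a set" assume M: "maximal_left_ideal M"
  then have "j \<in> M" using assms by (auto simp: jacobson_radical_def)
  then show "1 - j \<notin> M"
    using M left_ideal_add[of M "1 - j" j] by (auto dest: maximal_left_idealD)
qed

lemma one_minus_jacobson_radical_invertible:
  fixes j :: "'a::ring_1"
  assumes "j \<in> jacobson_radical"
  shows "invertible_elem (1 - j)"
proof -
  obtain v where v: "v * (1 - j) = 1"
    using one_minus_jacobson_radical_left_invertible[OF assms] by blast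
  then have "v = 1 - - (v * j)" by (simp add: algebra_simps)
  moreover obtain w where "w * (1 - - (v * j)) = 1"
    using assms by (metis jacobson_radical_mult_left jacobson_radical_uminus
        one_minus_jacobson_radical_left_invertible)
  ultimately have "w * v = 1" by simp
  with v have "w = 1 - j" by (metis mult.assoc mult_1_left mult_1_right)
  with v \<open>w * v = 1\<close> show ?thesis unfolding invertible_elem_def by blast
qed

lemma geometric_sum_mult:
  fixes z :: "'a::ring_1"
  shows "(\<Sum>i<k. z ^ i) * (1 - z) = 1 - z ^ k" and "(1 - z) * (\<Sum>i<k. z ^ i) = 1 - z ^ k"
proof -
  show "(\<Sum>i<k. z ^ i) * (1 - z) = 1 - z ^ k"
  proof (induction k)
    case (Suc k)
    have "(\<Sum>i<Suc k. z ^ i) * (1 - z) = (\<Sum>i<k. z ^ i) * (1 - z) + z ^ k * (1 - z)"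
      by (simp add: distrib_right)
    also have "\<dots> = 1 - z ^ Suc k"
      using Suc by (simp add: right_diff_distrib power_Suc2 power_commutes)
    finally show ?case .
  qed simp
  show "(1 - z) * (\<Sum>i<k. z ^ i) = 1 - z ^ k"
  proof (induction k)
    case (Suc k)
    have "(1 - z) * (\<Sum>i<Suc k. z ^ i) = (1 - z) * (\<Sum>i<k. z ^ i) + (1 - z) * z ^ k"
      by (simp add: distrib_left)
    also have "\<dots> = 1 - z ^ Suc k"
      using Suc by (simp add: left_diff_distrib)
    finally show ?case .
  qed simp
qed

text \<open>A left ideal whose elements are nilpotent modulo the radical lies in the radical: if
  \<open>x \<notin> M\<close> for a maximal left ideal \<open>M\<close>, then \<open>1 = m + a x\<close>, and \<open>m = 1 - a x\<close> would be left
  invertible by a geometric series.\<close>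

lemma maximal_left_ideal_extend:
  fixes x :: "'a::ring_1"
  assumes M: "maximal_left_ideal M" and "x \<notin> M"
  obtains m a where "m \<in> M" "1 = m + a * x"
proof -
  define M' where "M' = {m + a * x | m a. m \<in> M}"
  have M_left_ideal: "left_ideal M" using M by (rule maximal_left_ideal_left_ideal)
  have "left_ideal M'"
    unfolding left_ideal_def M'_def
  proof (intro conjI ballI allI)
    show "0 \<in> {m + a * x |m a. m \<in> M}"
      using left_ideal_zero[OF M_left_ideal] by (auto intro!: exI[of _ 0])
  next
    fix p q assume "p \<in> {m + a * x |m a. m \<in> M}" "q \<in> {m + a * x |m a. m \<in> M}"
    then obtain m1 a1 m2 a2 where "p = m1 + a1 * x" "q = m2 + a2 * x" "m1 \<in> M" "m2 \<in> M" by auto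
    then show "p + q \<in> {m + a * x |m a. m \<in> M}"
      by (intro CollectI exI[of _ "m1 + m2"] exI[of _ "a1 + a2"])
         (auto simp: algebra_simps intro: left_ideal_add[OF M_left_ideal])
  next
    fix b p assume "p \<in> {m + a * x |m a. m \<in> M}"
    then obtain m1 a1 where "p = m1 + a1 * x" "m1 \<in> M" by auto
    then show "b * p \<in> {m + a * x |m a. m \<in> M}"
      by (intro CollectI exI[of _ "b * m1"] exI[of _ "b * a1"])
         (auto simp: algebra_simps intro: left_ideal_mult_left[OF M_left_ideal])
  qed
  moreover have "M \<subseteq> M'" unfolding M'_def by (force intro: exI[of _ 0])
  moreover have "x \<in> M'"
    unfolding M'_def using left_ideal_zero[OF M_left_ideal] by (force intro: exI[of _ 1])
  ultimately have "M' = UNIV" using M \<open>x \<notin> M\<close> unfolding maximal_left_ideal_def by blast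
  then show ?thesis unfolding M'_def using that by blast
qed

lemma left_ideal_subset_jacobson_radical:
  fixes N :: "'a::ring_1 set"
  assumes N: "left_ideal N" and nil: "\<And>x. x \<in> N \<Longrightarrow> \<exists>k. x ^ k \<in> jacobson_radical"
  shows "N \<subseteq> jacobson_radical"
proof
  fix x assume "x \<in> N"
  show "x \<in> jacobson_radical"
    unfolding jacobson_radical_def
  proof (rule InterI, rule ccontr)
    fix M assume "M \<in> {I. maximal_left_ideal I}" and "x \<notin> M"
    then have M: "maximal_left_ideal M" by simp
    then obtain m a where "m \<in> M" and m: "m = 1 - a * x"
      using maximal_left_ideal_extend \<open>x \<notin> M\<close> by (metis add_diff_cancel_right')
    obtain k where "(a * x) ^ k \<in> jacobson_radical"
      using nil left_ideal_mult_left[OF N \<open>x \<in> N\<close>] by blast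
    then obtain v where "v * (1 - (a * x) ^ k) = 1"
      using one_minus_jacobson_radical_left_invertible by blast
    then have "(v * (\<Sum>i<k. (a * x) ^ i)) * m = 1"
      unfolding m by (simp add: mult.assoc geometric_sum_mult)
    then have "1 \<in> M"
      by (metis \<open>m \<in> M\<close> M maximal_left_ideal_left_ideal left_ideal_mult_left)
    with M show False by (simp add: maximal_left_ideal_one)
  qed
qed

definition polys :: "'a::real_algebra_1 \<Rightarrow> 'a set" where
  "polys z = span (range (\<lambda>k. z ^ k))"

lemma power_in_polys [simp]: "z ^ k \<in> polys z"
  unfolding polys_def by (rule span_base) auto

lemma one_in_polys [simp]: "1 \<in> polys z" and self_in_polys [simp]: "z \<in> polys z"
  using power_in_polys[of z 0] power_in_polys[of z 1] by simp_all

lemma polys_scaleR: "p \<in> polys z \<Longrightarrow> c *\<^sub>R p \<in> polys z"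
  and polys_add: "p \<in> polys z \<Longrightarrow> q \<in> polys z \<Longrightarrow> p + q \<in> polys z"
  and polys_sum: "(\<And>i. i \<in> S \<Longrightarrow> f i \<in> polys z) \<Longrightarrow> sum f S \<in> polys z"
  unfolding polys_def by (simp_all add: span_scale span_add span_sum)

lemma polys_mult_power:
  assumes "p \<in> polys z"
  shows "p * z ^ k \<in> polys z \<and> z ^ k * p = p * z ^ k"
  using assms unfolding polys_def
proof (induction rule: span_induct_alt)
  case (step c x y)
  then obtain j where x: "x = z ^ j" by auto
  have "(c *\<^sub>R x + y) * z ^ k = c *\<^sub>R z ^ (j + k) + y * z ^ k"
    by (simp add: x distrib_right power_add)
  then show ?case
    using step power_in_polys[of z "j + k"]
    by (auto simp: polys_def x distrib_left distrib_right power_commutes power_add[symmetric]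
        add.commute intro: span_add span_scale)
qed (simp add: span_zero)

lemma polys_mult:
  assumes "p \<in> polys z" "q \<in> polys z"
  shows polys_mult_closed: "p * q \<in> polys z" and polys_commute: "p * q = q * p"
proof -
  have "p * q \<in> polys z \<and> p * q = q * p"
    using assms(2) unfolding polys_def
  proof (induction rule: span_induct_alt)
    case (step c x y)
    then obtain j where "x = z ^ j" by auto
    with step polys_mult_power[OF assms(1), of j] show ?case
      by (auto simp: polys_def distrib_left distrib_right intro!: span_add span_scale)
  qed (simp add: span_zero)
  then show "p * q \<in> polys z" "p * q = q * p" by blast+
qed

lemma polys_power: "p \<in> polys z \<Longrightarrow> p ^ k \<in> polys z"
  by (induction k) (auto simp: polys_mult_closed)

lemma finite_dim_spaceE:
  assumes "finite_dim_space TYPE('a::real_vector)"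
  obtains S :: "'a::real_vector set" where "finite S" "span S = UNIV"
  using assms unfolding finite_dim_space_def by blast

lemma finite_dim_space_independent_finite:
  assumes "finite_dim_space TYPE('a::real_vector)" "independent (B :: 'a set)"
  shows "finite B"
proof -
  obtain S :: "'a set" where "finite S" "span S = UNIV" using assms(1) by (rule finite_dim_spaceE)
  then show ?thesis using independent_span_bound assms(2) by blast
qed

lemma power_relation_if_dependent:
  fixes z :: "'a::real_algebra_1"
  assumes rel: "(\<Sum>k\<le>D. c k *\<^sub>R z ^ k) = 0" and nontrivial: "c k0 \<noteq> 0" "k0 \<le> D"
  shows "\<exists>n. \<exists>q\<in>polys z. z ^ n = z ^ Suc n * q"
proof -
  define n where "n = (LEAST k. c k \<noteq> 0)"
  have "c n \<noteq> 0" using nontrivial(1) unfolding n_def by (rule LeastI)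
  have "n \<le> k0" using nontrivial(1) unfolding n_def by (rule Least_le)
  have below_n: "c k = 0" if "k < n" for k using that not_less_Least unfolding n_def by blast
  define q where "q = (\<Sum>k\<in>{Suc n..D}. c k *\<^sub>R z ^ (k - Suc n))"
  have split: "{..D} = {..<n} \<union> {n..D}" using \<open>n \<le> k0\<close> nontrivial(2) by auto
  have "(\<Sum>k\<le>D. c k *\<^sub>R z ^ k) = (\<Sum>k<n. c k *\<^sub>R z ^ k) + (\<Sum>k\<in>{n..D}. c k *\<^sub>R z ^ k)"
    unfolding split by (rule sum.union_disjoint) auto
  also have "\<dots> = (\<Sum>k\<in>{n..D}. c k *\<^sub>R z ^ k)" using below_n by simp
  also have "\<dots> = c n *\<^sub>R z ^ n + (\<Sum>k\<in>{Suc n..D}. c k *\<^sub>R z ^ k)"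
    using \<open>n \<le> k0\<close> nontrivial(2) by (simp add: sum.atLeast_Suc_atMost)
  also have "(\<Sum>k\<in>{Suc n..D}. c k *\<^sub>R z ^ k) = z ^ Suc n * q"
    unfolding q_def sum_distrib_left
    by (intro sum.cong refl) (simp add: mult_scaleR_right flip: power_add del: power_Suc)
  finally have eq: "c n *\<^sub>R z ^ n = - (z ^ Suc n * q)"
    using rel by (simp add: add_eq_0_iff2 del: power_Suc)
  have "z ^ n = inverse (c n) *\<^sub>R (c n *\<^sub>R z ^ n)" using \<open>c n \<noteq> 0\<close> by simp
  also have "\<dots> = z ^ Suc n * ((- inverse (c n)) *\<^sub>R q)"
    unfolding eq by (simp add: mult_scaleR_right del: power_Suc)
  finally have "z ^ n = z ^ Suc n * ((- inverse (c n)) *\<^sub>R q)" .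
  moreover have "(- inverse (c n)) *\<^sub>R q \<in> polys z"
    unfolding q_def by (intro polys_scaleR polys_sum power_in_polys)
  ultimately show ?thesis by blast
qed

text \<open>In finite dimension the powers of \<open>z\<close> are linearly dependent; this is the algebraic
  core of Fitting's lemma.\<close>

lemma power_relation:
  fixes z :: "'a::real_algebra_1"
  assumes fd: "finite_dim_space TYPE('a)"
  shows "\<exists>n. \<exists>q\<in>polys z. z ^ n = z ^ Suc n * q"
proof -
  obtain S :: "'a set" where S: "finite S" "span S = UNIV" using fd by (rule finite_dim_spaceE)
  define D where "D = card S"
  show ?thesis
  proof (cases "inj_on (\<lambda>k. z ^ k) {..D}")
    case False
    then obtain i j where "i \<noteq> j" "z ^ i = z ^ j" unfolding inj_on_def by blast
    then obtain a b where "a < b" "z ^ a = z ^ b" by (metis linorder_neqE_nat)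
    moreover have "Suc a + (b - Suc a) = b" using \<open>a < b\<close> by simp
    ultimately have "z ^ a = z ^ Suc a * z ^ (b - Suc a)" by (simp only: power_add[symmetric])
    then show ?thesis using power_in_polys by blast
  next
    case True
    define P where "P = (\<lambda>k. z ^ k) ` {..D}"
    have "card P = Suc D" unfolding P_def using card_image[OF True] by simp
    then have "dependent P"
      using independent_span_bound[OF S(1)] S(2) unfolding D_def by fastforce
    then obtain u where u: "\<exists>v\<in>P. u v \<noteq> 0" "(\<Sum>v\<in>P. u v *\<^sub>R v) = 0"
      using dependent_finite[of P] unfolding P_def by blast
    have "(\<Sum>k\<le>D. u (z ^ k) *\<^sub>R z ^ k) = 0"
      using u(2) unfolding P_def by (simp add: sum.reindex[OF True])
    moreover obtain k0 where "u (z ^ k0) \<noteq> 0" "k0 \<le> D" using u(1) unfolding P_def by auto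
    ultimately show ?thesis by (rule power_relation_if_dependent)
  qed
qed

lemma power_mult_polys_eq:
  assumes q: "q \<in> polys z" and rel: "z ^ n = z ^ Suc n * q"
  shows "z ^ n = z ^ (n + k) * q ^ k"
proof (induction k)
  case (Suc k)
  have commute: "z * q ^ k = q ^ k * z" using polys_commute[OF self_in_polys polys_power[OF q]] .
  have "z ^ (n + Suc k) * q ^ Suc k = z ^ (n + k) * (z * q ^ k) * q"
    by (simp only: add_Suc_right power_Suc2 mult.assoc)
  also have "\<dots> = (z ^ (n + k) * q ^ k) * z * q" by (simp only: commute mult.assoc)
  also have "\<dots> = z ^ Suc n * q" by (simp only: Suc.IH[symmetric] power_Suc2)
  finally show ?case using rel by metis
qed simp

lemma fitting_idempotent:
  fixes z :: "'a::real_algebra_1"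
  assumes fd: "finite_dim_space TYPE('a)"
  obtains n q where "0 < n" "q \<in> polys z"
    "(q * z ^ n) * (q * z ^ n) = q * z ^ n" "z ^ n * (q * z ^ n) = z ^ n"
proof -
  obtain n0 q where q: "q \<in> polys z" and rel0: "z ^ n0 = z ^ Suc n0 * q"
    using power_relation[OF fd] by blast
  define n where "n = Suc n0"
  have rel: "z ^ n = z ^ Suc n * q" using rel0 unfolding n_def by (metis mult.assoc power_Suc)
  have qn: "q ^ n \<in> polys z" using q by (rule polys_power)
  have commute: "z ^ n * q ^ n = q ^ n * z ^ n" by (rule polys_commute[OF power_in_polys qn])
  have "z ^ n = z ^ n * z ^ n * q ^ n"
    using power_mult_polys_eq[OF q rel, of n] by (simp only: power_add)
  then have absorb: "z ^ n * (q ^ n * z ^ n) = z ^ n"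
    by (metis commute mult.assoc)
  have "(q ^ n * z ^ n) * (q ^ n * z ^ n) = q ^ n * z ^ n"
    by (simp add: mult.assoc absorb)
  with absorb qn show ?thesis by (intro that[of n "q ^ n"]) (simp_all add: n_def)
qed

lemma jacobson_radical_nilpotent:
  fixes x :: "'a::real_algebra_1"
  assumes fd: "finite_dim_space TYPE('a)" and x: "x \<in> jacobson_radical"
  shows "\<exists>n. x ^ n = 0"
proof -
  obtain n q where q: "q \<in> polys x" and rel: "x ^ n = x ^ Suc n * q"
    using power_relation[OF fd] by blast
  obtain v where v: "(1 - q * x) * v = 1"
    using one_minus_jacobson_radical_invertible[OF jacobson_radical_mult_left[OF x]]
    unfolding invertible_elem_def by blast
  have "x ^ n * (q * x) = x ^ Suc n * q"
    using polys_commute[OF q self_in_polys] by (simp only: power_Suc2 mult.assoc)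
  then have "x ^ n * (1 - q * x) = x ^ n - x ^ Suc n * q" by (simp only: right_diff_distrib mult_1_right)
  then have "x ^ n * (1 - q * x) = 0" by (simp only: rel[symmetric] diff_self)
  then have "x ^ n = 0" using v by (metis mult.assoc mult_1_right mult_zero_left)
  then show ?thesis by blast
qed

definition is_basis :: "'a::real_vector set \<Rightarrow> bool" where
  "is_basis B \<longleftrightarrow> finite B \<and> independent B \<and> span B = UNIV"

definition trace_wrt :: "'a::real_vector set \<Rightarrow> ('a \<Rightarrow> 'a) \<Rightarrow> real" where
  "trace_wrt B f = (\<Sum>b\<in>B. representation B (f b) b)"

text \<open>The trace of a linear endomorphism, computed in an arbitrary basis (only meaningful when
  the space is finite-dimensional).\<close>

definition lin_trace :: "('a::real_vector \<Rightarrow> 'a) \<Rightarrow> real" where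
  "lin_trace f = trace_wrt (SOME B. is_basis B) f"

lemma is_basisI:
  assumes "finite_dim_space TYPE('a::real_vector)" "independent (B :: 'a set)" "span B = UNIV"
  shows "is_basis B"
  using assms finite_dim_space_independent_finite unfolding is_basis_def by blast

lemma is_basis_exists:
  assumes fd: "finite_dim_space TYPE('a::real_vector)"
  shows "\<exists>B :: 'a set. is_basis B"
proof -
  obtain S :: "'a set" where "span S = UNIV" using fd by (rule finite_dim_spaceE)
  moreover obtain B where "B \<subseteq> S" "independent B" "S \<subseteq> span B"
    using maximal_independent_subset by blast
  ultimately have "span B = UNIV" by (metis span_mono span_span top.extremum_uniqueI)
  with \<open>independent B\<close> show ?thesis using is_basisI[OF fd] by blast
qed

context
  fixes B :: "'a::real_vector set"
  assumes B: "is_basis B"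
begin

lemma representation_sum_eq: "(\<Sum>b\<in>B. representation B v b *\<^sub>R b) = v"
  using B unfolding is_basis_def by (intro sum_representation_eq) auto

lemma representation_basis_add: "representation B (u + v) b = representation B u b + representation B v b"
  and representation_basis_scaleR: "representation B (c *\<^sub>R v) b = c * representation B v b"
  and representation_basis_sum: "representation B (sum f I) b = (\<Sum>i\<in>I. representation B (f i) b)"
  using B unfolding is_basis_def by (simp_all add: representation_add representation_scale representation_sum)

lemma trace_wrt_comp_expand:
  assumes f: "linear f"
  shows "trace_wrt B (\<lambda>x. f (g x)) =
    (\<Sum>b\<in>B. \<Sum>c\<in>B. representation B (g b) c * representation B (f c) b)"
proof -
  have "trace_wrt B (\<lambda>x. f (g x)) =
      (\<Sum>b\<in>B. representation B (f (\<Sum>c\<in>B. representation B (g b) c *\<^sub>R c)) b)"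
    unfolding trace_wrt_def representation_sum_eq ..
  then show ?thesis
    by (simp add: linear_sum[OF f] linear_scale[OF f] representation_basis_sum representation_basis_scaleR)
qed

lemma trace_wrt_comp_commute:
  assumes "linear f" "linear g"
  shows "trace_wrt B (\<lambda>x. f (g x)) = trace_wrt B (\<lambda>x. g (f x))"
  unfolding trace_wrt_comp_expand[OF assms(1)] trace_wrt_comp_expand[OF assms(2)]
  by (subst sum.swap) (simp add: mult.commute)

lemma trace_wrt_add: "trace_wrt B (\<lambda>x. f x + g x) = trace_wrt B f + trace_wrt B g"
  and trace_wrt_scaleR: "trace_wrt B (\<lambda>x. c *\<^sub>R f x) = c * trace_wrt B f"
  unfolding trace_wrt_def
  by (simp_all add: representation_basis_add representation_basis_scaleR sum.distrib sum_distrib_left)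

end

lemma trace_wrt_basis_indep:
  assumes B: "is_basis B" and C: "is_basis C" and f: "linear f"
  shows "trace_wrt B f = trace_wrt C f"
proof -
  have "trace_wrt B f = (\<Sum>b\<in>B. representation B (f (\<Sum>c\<in>C. representation C b c *\<^sub>R c)) b)"
    unfolding trace_wrt_def representation_sum_eq[OF C] ..
  also have "\<dots> = (\<Sum>c\<in>C. \<Sum>b\<in>B. representation B (f c) b * representation C b c)"
    by (simp add: linear_sum[OF f] linear_scale[OF f] representation_basis_sum[OF B]
        representation_basis_scaleR[OF B] sum.swap[of _ B] mult.commute)
  also have "\<dots> = (\<Sum>c\<in>C. representation C (\<Sum>b\<in>B. representation B (f c) b *\<^sub>R b) c)"
    by (simp add: representation_basis_sum[OF C] representation_basis_scaleR[OF C])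
  also have "\<dots> = trace_wrt C f"
    unfolding trace_wrt_def representation_sum_eq[OF B] ..
  finally show ?thesis .
qed

lemma lin_trace_eq_trace_wrt:
  assumes fd: "finite_dim_space TYPE('a::real_vector)" and B: "is_basis (B :: 'a set)"
    and f: "linear f"
  shows "lin_trace f = trace_wrt B f"
  unfolding lin_trace_def
  by (rule trace_wrt_basis_indep[OF someI_ex[OF is_basis_exists[OF fd]] B f])

context
  assumes fd: "finite_dim_space TYPE('a::real_vector)"
begin

lemma lin_trace_add: "lin_trace (\<lambda>x::'a. f x + g x) = lin_trace f + lin_trace g"
  and lin_trace_scaleR: "lin_trace (\<lambda>x::'a. c *\<^sub>R f x) = c * lin_trace f"
  unfolding lin_trace_def using someI_ex[OF is_basis_exists[OF fd]]
  by (simp_all add: trace_wrt_add trace_wrt_scaleR)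

lemma lin_trace_comp_commute:
  fixes f g :: "'a \<Rightarrow> 'a"
  assumes "linear f" "linear g"
  shows "lin_trace (\<lambda>x. f (g x)) = lin_trace (\<lambda>x. g (f x))"
  unfolding lin_trace_def using someI_ex[OF is_basis_exists[OF fd]] assms
  by (simp add: trace_wrt_comp_commute)

text \<open>In a basis adapted to \<open>V = range f \<oplus> ker f\<close> the diagonal of an idempotent \<open>f\<close> consists of
  zeros and ones, and at least one entry is \<open>1\<close> when \<open>f \<noteq> 0\<close>.\<close>

lemma lin_trace_idempotent_pos:
  fixes f :: "'a \<Rightarrow> 'a"
  assumes f: "linear f" and idem: "\<And>x. f (f x) = f x" and nonzero: "f x0 \<noteq> 0"
  shows "lin_trace f > 0"
proof -
  define V where "V = range f \<union> range (\<lambda>x. x - f x)"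
  obtain B where B: "B \<subseteq> V" "independent B" "V \<subseteq> span B"
    using maximal_independent_subset[of V] by blast
  have "x \<in> span B" for x
    using B(3) span_add[of "f x" B "x - f x"] unfolding V_def by auto
  then have basis: "is_basis B" using is_basisI[OF fd B(2)] by auto
  have fixed_or_killed: "f b = b \<or> f b = 0" if "b \<in> B" for b
    using that B(1) unfolding V_def by (auto simp: idem linear_diff[OF f])
  have diagonal: "representation B (f b) b = (if f b = b then 1 else 0)" if "b \<in> B" for b
    using fixed_or_killed[OF that] that B(2) by (auto simp: representation_basis representation_zero)
  obtain b0 where b0: "b0 \<in> B" "f b0 = b0"
  proof (rule ccontr)
    assume "\<not> thesis"
    then have all_zero: "\<forall>b\<in>B. f b = 0" using that fixed_or_killed by blast
    have "f x = 0" if "x \<in> span B" for x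
      using that by (induction rule: span_induct_alt)
        (use all_zero in \<open>simp_all add: linear_add[OF f] linear_scale[OF f] linear_0[OF f]\<close>)
    with nonzero \<open>x0 \<in> span B\<close> show False by blast
  qed
  have "lin_trace f = (\<Sum>b\<in>B. if f b = b then 1 else 0)"
    unfolding lin_trace_eq_trace_wrt[OF fd basis f] trace_wrt_def using diagonal by simp
  also have "\<dots> \<ge> 1"
    using member_le_sum[of b0 B "\<lambda>b. if f b = b then 1 else (0::real)"] b0 basis
    by (auto simp: is_basis_def)
  finally show ?thesis by linarith
qed

text \<open>A nilpotent \<open>f\<close> is strictly triangular in a basis built along the flag
  \<open>range (f\<^sup>n) \<subseteq> range (f\<^sup>n\<^sup>-\<^sup>1) \<subseteq> \<dots> \<subseteq> V\<close>.\<close>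

lemma nilpotent_triangular_basis:
  fixes f :: "'a \<Rightarrow> 'a"
  assumes nil: "\<And>x. (f ^^ n) x = 0" and "k \<le> n"
  shows "\<exists>B. independent B \<and> B \<subseteq> range (f ^^ (n - k)) \<and> range (f ^^ (n - k)) \<subseteq> span B
    \<and> (\<forall>b\<in>B. f b \<in> span (B - {b}))"
  using \<open>k \<le> n\<close>
proof (induction k)
  case 0
  show ?case using nil by (intro exI[of _ "{}"]) (auto simp: span_zero independent_empty)
next
  case (Suc k)
  define m where "m = n - Suc k"
  have nk: "n - k = Suc m" using Suc.prems unfolding m_def by simp
  obtain B where B: "independent B" "B \<subseteq> range (f ^^ Suc m)" "range (f ^^ Suc m) \<subseteq> span B"
      "\<forall>b\<in>B. f b \<in> span (B - {b})"
    using Suc.IH Suc.prems unfolding nk by auto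
  have "(f ^^ Suc m) x = (f ^^ m) (f x)" for x by (simp only: funpow_Suc_right comp_apply)
  then have "B \<subseteq> range (f ^^ m)" using B(2) by auto
  then obtain B' where B': "B \<subseteq> B'" "B' \<subseteq> range (f ^^ m)" "independent B'"
      "range (f ^^ m) \<subseteq> span B'"
    using maximal_independent_subset_extend[OF _ B(1)] by blast
  have "f b \<in> span (B' - {b})" if b: "b \<in> B'" for b
  proof (cases "b \<in> B")
    case True
    then show ?thesis using B(4) span_mono[of "B - {b}" "B' - {b}"] B'(1) by blast
  next
    case False
    obtain y where "b = (f ^^ m) y" using b B'(2) by auto
    then have "f b \<in> span B" using B(3) by auto
    moreover have "B \<subseteq> B' - {b}" using B'(1) False by auto
    ultimately show ?thesis using span_mono by blast
  qed
  with B' show ?case unfolding m_def[symmetric] by blast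
qed

lemma lin_trace_nilpotent:
  fixes f :: "'a \<Rightarrow> 'a"
  assumes f: "linear f" and nil: "\<And>x. (f ^^ n) x = 0"
  shows "lin_trace f = 0"
proof -
  obtain B where B: "independent B" "range (f ^^ 0) \<subseteq> span B" "\<forall>b\<in>B. f b \<in> span (B - {b})"
    using nilpotent_triangular_basis[OF nil, of n] by auto
  have basis: "is_basis B" using is_basisI[OF fd B(1)] B(2) by auto
  have "representation B (f b) b = 0" if "b \<in> B" for b
  proof -
    have "representation B (f b) = representation (B - {b}) (f b)"
      using representation_extend[OF B(1)] B(3) that by blast
    then show ?thesis using representation_ne_zero[of "B - {b}" "f b" b] by auto
  qed
  then show ?thesis unfolding lin_trace_eq_trace_wrt[OF fd basis f] trace_wrt_def by simp
qed

end

definition ltrace :: "'a::real_algebra_1 \<Rightarrow> real" where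
  "ltrace z = lin_trace (\<lambda>x. z * x)"

lemma linear_mult_left: "linear (\<lambda>x. (z::'a::real_algebra_1) * x)"
  and linear_mult_right: "linear (\<lambda>x. x * (z::'a::real_algebra_1))"
  by (auto intro!: linearI simp: distrib_left distrib_right)

lemma funpow_mult_left: "((\<lambda>x. z * x) ^^ n) x = (z::'a::monoid_mult) ^ n * x"
  by (induction n) (simp_all add: mult.assoc)

lemma ltrace_zero [simp]: "ltrace (0::'a::real_algebra_1) = 0"
  unfolding ltrace_def lin_trace_def trace_wrt_def by (simp add: representation_zero)

context
  assumes fd: "finite_dim_space TYPE('a::real_algebra_1)"
begin

lemma ltrace_add: "ltrace (z + w :: 'a) = ltrace z + ltrace w"
  unfolding ltrace_def distrib_right by (rule lin_trace_add[OF fd])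

lemma ltrace_scaleR: "ltrace (c *\<^sub>R z :: 'a) = c * ltrace z"
  unfolding ltrace_def mult_scaleR_left by (rule lin_trace_scaleR[OF fd])

lemma ltrace_diff: "ltrace (z - w :: 'a) = ltrace z - ltrace w"
  using ltrace_add[of "z - w" w] by simp

lemma ltrace_sum: "ltrace (sum (f :: _ \<Rightarrow> 'a) I) = (\<Sum>i\<in>I. ltrace (f i))"
  by (induction I rule: infinite_finite_induct) (simp_all add: ltrace_add)

lemma ltrace_commute: "ltrace (x * y :: 'a) = ltrace (y * x)"
  using lin_trace_comp_commute[OF fd linear_mult_left[of x] linear_mult_left[of y]]
  unfolding ltrace_def mult.assoc .

lemma ltrace_idempotent_pos: "e * e = (e::'a) \<Longrightarrow> e \<noteq> 0 \<Longrightarrow> ltrace e > 0"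
  unfolding ltrace_def
  by (rule lin_trace_idempotent_pos[OF fd linear_mult_left, of e 1]) (simp_all flip: mult.assoc)

lemma ltrace_nilpotent: "z ^ n = (0::'a) \<Longrightarrow> ltrace z = 0"
  unfolding ltrace_def
  by (rule lin_trace_nilpotent[OF fd linear_mult_left, where n = n]) (simp add: funpow_mult_left)

end

context
  assumes fd: "finite_dim_space TYPE('a::real_algebra_1)"
begin

lemma ltrace_mult_polys:
  assumes powers: "\<And>k. ltrace (z ^ Suc k) = 0" and p: "p \<in> polys (z::'a)"
  shows "ltrace (z * p) = 0"
  using p unfolding polys_def
proof (induction rule: span_induct_alt)
  case (step c x y)
  then obtain k where "x = z ^ k" by auto
  then have "ltrace (z * (c *\<^sub>R x + y)) = c * ltrace (z ^ Suc k) + ltrace (z * y)"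
    by (simp add: distrib_left mult_scaleR_right ltrace_add[OF fd] ltrace_scaleR[OF fd])
  then show ?case using powers step.IH by simp
qed simp

lemma nilpotent_if_ltrace_powers_zero:
  assumes powers: "\<And>k. ltrace ((z::'a) ^ Suc k) = 0"
  shows "\<exists>n. z ^ n = 0"
proof -
  obtain n q where "0 < n" "q \<in> polys z" and idem: "(q * z ^ n) * (q * z ^ n) = q * z ^ n"
    and absorb: "z ^ n * (q * z ^ n) = z ^ n"
    using fitting_idempotent[OF fd] by blast
  obtain m where "n = Suc m" using \<open>0 < n\<close> gr0_implies_Suc by blast
  have "q * z ^ n = (q * z) * z ^ m" by (simp add: \<open>n = Suc m\<close> mult.assoc)
  also have "q * z = z * q" using polys_commute[OF \<open>q \<in> polys z\<close> self_in_polys] .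
  finally have "q * z ^ n = z * (q * z ^ m)" by (simp add: mult.assoc)
  moreover have "q * z ^ m \<in> polys z"
    using \<open>q \<in> polys z\<close> by (simp add: polys_mult_closed)
  ultimately have "ltrace (q * z ^ n) = 0" using ltrace_mult_polys[OF powers] by simp
  then have "q * z ^ n = 0" using ltrace_idempotent_pos[OF fd idem] by fastforce
  then show ?thesis using absorb by auto
qed

lemma left_ideal_trace_radical: "left_ideal {x::'a. \<forall>y. ltrace (x * y) = 0}"
  unfolding left_ideal_def
proof (intro conjI ballI allI)
  fix a x :: 'a assume "x \<in> {x. \<forall>y. ltrace (x * y) = 0}"
  moreover have "ltrace (a * x * y) = ltrace (x * (y * a))" for y
    using ltrace_commute[OF fd, of a "x * y"] by (simp add: mult.assoc)
  ultimately show "a * x \<in> {x. \<forall>y. ltrace (x * y) = 0}" by simp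
qed (auto simp: distrib_right ltrace_add[OF fd])

theorem jacobson_radical_eq_trace_radical:
  "(jacobson_radical :: 'a set) = {x. \<forall>y. ltrace (x * y) = 0}"
proof
  show "(jacobson_radical :: 'a set) \<subseteq> {x. \<forall>y. ltrace (x * y) = 0}"
  proof safe
    fix x y :: 'a assume "x \<in> jacobson_radical"
    then obtain n where "(y * x) ^ n = 0"
      using jacobson_radical_nilpotent[OF fd] jacobson_radical_mult_left by blast
    then have "ltrace (y * x) = 0" by (rule ltrace_nilpotent[OF fd])
    then show "ltrace (x * y) = 0" using ltrace_commute[OF fd, of x y] by simp
  qed
next
  have "\<exists>k. x ^ k \<in> jacobson_radical" if "x \<in> {x::'a. \<forall>y. ltrace (x * y) = 0}" for x
  proof -
    have "ltrace (x ^ Suc k) = 0" for k using that by (simp add: power_Suc)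
    then obtain n where "x ^ n = 0" using nilpotent_if_ltrace_powers_zero by blast
    then show ?thesis using jacobson_radical_zero by metis
  qed
  then show "{x::'a. \<forall>y. ltrace (x * y) = 0} \<subseteq> jacobson_radical"
    by (rule left_ideal_subset_jacobson_radical[OF left_ideal_trace_radical])
qed

lemma jacobson_radical_iff_trace: "(x::'a) \<in> jacobson_radical \<longleftrightarrow> (\<forall>y. ltrace (x * y) = 0)"
  using jacobson_radical_eq_trace_radical by blast

lemma jacobson_radical_iff_trace': "(x::'a) \<in> jacobson_radical \<longleftrightarrow> (\<forall>y. ltrace (y * x) = 0)"
  unfolding jacobson_radical_iff_trace ltrace_commute[OF fd, of x] ..

lemma jacobson_radical_mult_right: "(x::'a) \<in> jacobson_radical \<Longrightarrow> x * a \<in> jacobson_radical"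
  by (simp add: jacobson_radical_iff_trace mult.assoc)

lemma ltrace_jacobson_radical: "(x::'a) \<in> jacobson_radical \<Longrightarrow> ltrace x = 0"
  using jacobson_radical_iff_trace[of x] by (metis mult_1_right)

end

definition span_mod_radical :: "'a::real_algebra_1 set \<Rightarrow> 'a set" where
  "span_mod_radical B = {s + r | s r. s \<in> span B \<and> r \<in> jacobson_radical}"

definition independent_mod_radical :: "'a::real_algebra_1 set \<Rightarrow> bool" where
  "independent_mod_radical B \<longleftrightarrow>
    (\<forall>u. (\<Sum>b\<in>B. u b *\<^sub>R b) \<in> jacobson_radical \<longrightarrow> (\<forall>b\<in>B. u b = 0))"

text \<open>\<open>B\<close> spans the algebra modulo its radical and \<open>a\<close> is the dual family of \<open>B\<close> for the trace
  form \<open>(x, y) \<mapsto> ltrace (x * y)\<close>, which is nondegenerate on \<open>A / rad A\<close>.\<close>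

definition trace_dual_basis :: "'a::real_algebra_1 set \<Rightarrow> ('a \<Rightarrow> 'a) \<Rightarrow> bool" where
  "trace_dual_basis B a \<longleftrightarrow> finite B \<and> span_mod_radical B = UNIV \<and>
    (\<forall>b\<in>B. \<forall>b'\<in>B. ltrace (a b * b') = (if b = b' then 1 else 0))"

lemma subspace_span_mod_radical: "subspace (span_mod_radical B)"
  unfolding subspace_def span_mod_radical_def
proof (intro conjI ballI allI)
  show "0 \<in> {s + r |s r. s \<in> span B \<and> r \<in> jacobson_radical}"
    using span_zero jacobson_radical_zero by force
next
  fix x y assume "x \<in> {s + r |s r. s \<in> span B \<and> r \<in> jacobson_radical}"
    "y \<in> {s + r |s r. s \<in> span B \<and> r \<in> jacobson_radical}"
  then obtain s1 r1 s2 r2 where "x = s1 + r1" "y = s2 + r2" "s1 \<in> span B" "s2 \<in> span B"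
    "r1 \<in> jacobson_radical" "r2 \<in> jacobson_radical" by blast
  then show "x + y \<in> {s + r |s r. s \<in> span B \<and> r \<in> jacobson_radical}"
    by (intro CollectI exI[of _ "s1 + s2"] exI[of _ "r1 + r2"])
       (auto intro: span_add jacobson_radical_add)
next
  fix c x assume "x \<in> {s + r |s r. s \<in> span B \<and> r \<in> jacobson_radical}"
  then obtain s r where "x = s + r" "s \<in> span B" "r \<in> jacobson_radical" by blast
  then show "c *\<^sub>R x \<in> {s + r |s r. s \<in> span B \<and> r \<in> jacobson_radical}"
    by (intro CollectI exI[of _ "c *\<^sub>R s"] exI[of _ "c *\<^sub>R r"])
       (auto intro: span_scale jacobson_radical_scaleR simp: scaleR_right_distrib)
qed

lemma span_subset_span_mod_radical: "span B \<subseteq> span_mod_radical B"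
  unfolding span_mod_radical_def using jacobson_radical_zero by force

lemma span_mod_radical_mono: "B \<subseteq> C \<Longrightarrow> span_mod_radical B \<subseteq> span_mod_radical C"
  unfolding span_mod_radical_def using span_mono by blast

lemma span_mod_radical_eq_UNIV: "span G = UNIV \<Longrightarrow> G \<subseteq> span_mod_radical B \<Longrightarrow> span_mod_radical B = UNIV"
  using span_minimal[OF _ subspace_span_mod_radical] by blast

lemma independent_mod_radical_insert:
  assumes "finite B" "x \<notin> span_mod_radical B" and indep: "independent_mod_radical B"
  shows "independent_mod_radical (insert x B)"
  unfolding independent_mod_radical_def
proof (intro allI impI)
  fix u assume u: "(\<Sum>b\<in>insert x B. u b *\<^sub>R b) \<in> jacobson_radical"
  have "x \<notin> B" using assms(2) span_subset_span_mod_radical span_base by blast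
  then have split: "(\<Sum>b\<in>insert x B. u b *\<^sub>R b) = u x *\<^sub>R x + (\<Sum>b\<in>B. u b *\<^sub>R b)"
    using assms(1) by simp
  have "u x = 0"
  proof (rule ccontr)
    assume "u x \<noteq> 0"
    then have "x = (- inverse (u x)) *\<^sub>R (\<Sum>b\<in>B. u b *\<^sub>R b)
        + inverse (u x) *\<^sub>R (\<Sum>b\<in>insert x B. u b *\<^sub>R b)"
      unfolding split by (simp add: scaleR_right_distrib)
    moreover have "(- inverse (u x)) *\<^sub>R (\<Sum>b\<in>B. u b *\<^sub>R b) \<in> span B"
      by (intro span_scale span_sum) (auto intro: span_base)
    ultimately have "x \<in> span_mod_radical B"
      unfolding span_mod_radical_def using jacobson_radical_scaleR[OF u] by blast
    with assms(2) show False ..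
  qed
  with u split have "(\<Sum>b\<in>B. u b *\<^sub>R b) \<in> jacobson_radical" by simp
  with indep \<open>u x = 0\<close> show "\<forall>b\<in>insert x B. u b = 0"
    unfolding independent_mod_radical_def by blast
qed

lemma independent_mod_radical_subset_exists:
  assumes "finite G"
  shows "\<exists>B\<subseteq>G. independent_mod_radical B \<and> G \<subseteq> span_mod_radical B"
  using assms
proof (induction G rule: finite_induct)
  case empty
  then show ?case by (auto simp: independent_mod_radical_def)
next
  case (insert g G)
  then obtain B where B: "B \<subseteq> G" "independent_mod_radical B" "G \<subseteq> span_mod_radical B" by blast
  have "finite B" using B(1) insert(1) finite_subset by blast
  show ?case
  proof (cases "g \<in> span_mod_radical B")
    case True
    then show ?thesis using B by blast
  next
    case False
    have "insert g G \<subseteq> span_mod_radical (insert g B)"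
      using B(3) span_mod_radical_mono[of B "insert g B"]
        span_subset_span_mod_radical[of "insert g B"] span_base[of g "insert g B"] by blast
    then show ?thesis
      using B(1) independent_mod_radical_insert[OF \<open>finite B\<close> False B(2)] by blast
  qed
qed

lemma independent_mod_radical_subset:
  assumes "independent_mod_radical C" "B \<subseteq> C" "finite C"
  shows "independent_mod_radical B"
  unfolding independent_mod_radical_def
proof (intro allI impI)
  fix u assume "(\<Sum>b\<in>B. u b *\<^sub>R b) \<in> jacobson_radical"
  moreover have "(\<Sum>b\<in>C. (if b \<in> B then u b else 0) *\<^sub>R b) = (\<Sum>b\<in>B. u b *\<^sub>R b)"
    using assms(2,3) by (intro sum.mono_neutral_cong_right) auto
  ultimately have "\<forall>b\<in>C. (if b \<in> B then u b else 0) = 0"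
    using assms(1) unfolding independent_mod_radical_def
    by (elim allE[of _ "\<lambda>b. if b \<in> B then u b else 0"]) simp
  with assms(2) show "\<forall>b\<in>B. u b = 0" by (metis (full_types) subsetD)
qed

lemma sum_mult_delta:
  assumes "finite B" "b' \<in> B"
  shows "(\<Sum>b\<in>B. f b * (if b = b' then 1 else 0)) = (f b' :: real)"
    and "(\<Sum>b\<in>B. f b * (if b' = b then 1 else 0)) = f b'"
  using assms by (simp_all add: if_distrib sum.delta' cong: if_cong)

context
  assumes fd: "finite_dim_space TYPE('a::real_algebra_1)"
begin

lemma dual_vector_exists:
  fixes a :: "'a \<Rightarrow> 'a"
  assumes dual: "\<forall>b\<in>B. \<forall>b'\<in>B. ltrace (a b * b') = (if b = b' then 1 else 0)"
    and "finite B" "x \<notin> B" and indep: "independent_mod_radical (insert x B)"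
  obtains ax where "\<forall>b\<in>B. ltrace (ax * b) = 0" "ltrace (ax * x) = 1"
proof -
  define v where "v = x - (\<Sum>b\<in>B. ltrace (a b * x) *\<^sub>R b)"
  have "v \<notin> jacobson_radical"
  proof
    assume "v \<in> jacobson_radical"
    define u where "u b = (if b = x then 1 else - ltrace (a b * x))" for b
    have "(\<Sum>b\<in>insert x B. u b *\<^sub>R b) = u x *\<^sub>R x + (\<Sum>b\<in>B. u b *\<^sub>R b)"
      using \<open>finite B\<close> \<open>x \<notin> B\<close> by simp
    also have "\<dots> = x + (\<Sum>b\<in>B. (- ltrace (a b * x)) *\<^sub>R b)"
      using \<open>x \<notin> B\<close> by (auto simp: u_def intro!: sum.cong)
    also have "\<dots> = v" unfolding v_def by (simp add: sum_negf)
    finally have "u x = 0"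
      using indep \<open>v \<in> jacobson_radical\<close> unfolding independent_mod_radical_def by blast
    then show False by (simp add: u_def)
  qed
  then obtain w where w: "ltrace (w * v) \<noteq> 0" using jacobson_radical_iff_trace'[OF fd] by blast
  define ax where "ax = inverse (ltrace (w * v)) *\<^sub>R (w - (\<Sum>b\<in>B. ltrace (w * b) *\<^sub>R a b))"
  have "ltrace (ax * y) = inverse (ltrace (w * v)) *
      (ltrace (w * y) - (\<Sum>b\<in>B. ltrace (w * b) * ltrace (a b * y)))" for y
    unfolding ax_def
    by (simp add: left_diff_distrib sum_distrib_right ltrace_scaleR[OF fd] ltrace_diff[OF fd]
        ltrace_sum[OF fd])
  moreover have "(\<Sum>b\<in>B. ltrace (w * b) * ltrace (a b * b')) = ltrace (w * b')" if "b' \<in> B" for b'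
    using dual that sum_mult_delta(1)[OF \<open>finite B\<close> that] by simp
  moreover have "ltrace (w * x) - (\<Sum>b\<in>B. ltrace (w * b) * ltrace (a b * x)) = ltrace (w * v)"
    unfolding v_def
    by (simp add: right_diff_distrib sum_distrib_left ltrace_scaleR[OF fd] ltrace_diff[OF fd]
        ltrace_sum[OF fd] mult.commute)
  ultimately show ?thesis using w by (intro that[of ax]) simp_all
qed

lemma dual_family_exists:
  fixes B :: "'a set"
  assumes "finite B" "independent_mod_radical B"
  shows "\<exists>a. \<forall>b\<in>B. \<forall>b'\<in>B. ltrace (a b * b') = (if b = b' then 1 else (0::real))"
  using assms
proof (induction B rule: finite_induct)
  case (insert x B)
  then have "independent_mod_radical B"
    using independent_mod_radical_subset[OF insert.prems] by blast
  then obtain a where dual: "\<forall>b\<in>B. \<forall>b'\<in>B. ltrace (a b * b') = (if b = b' then 1 else 0)"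
    using insert.IH by blast
  obtain ax where ax: "\<forall>b\<in>B. ltrace (ax * b) = 0" "ltrace (ax * x) = 1"
    using dual_vector_exists[OF dual insert(1,2) insert.prems] by blast
  define a' where "a' b = (if b = x then ax else a b - ltrace (a b * x) *\<^sub>R ax)" for b
  have "ltrace (a' b * b') = (if b = b' then 1 else 0)" if "b \<in> insert x B" "b' \<in> insert x B" for b b'
    using that dual ax insert(2)
    by (auto simp: a'_def left_diff_distrib ltrace_diff[OF fd] ltrace_scaleR[OF fd])
  then show ?case by blast
qed simp

lemma trace_dual_basis_exists:
  fixes G :: "'a set"
  assumes "finite G" "span G = UNIV"
  shows "\<exists>B a. B \<subseteq> G \<and> trace_dual_basis B a"
proof -
  obtain B where B: "B \<subseteq> G" "independent_mod_radical B" "G \<subseteq> span_mod_radical B"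
    using independent_mod_radical_subset_exists[OF assms(1)] by blast
  have "finite B" using B(1) assms(1) finite_subset by blast
  then obtain a where "\<forall>b\<in>B. \<forall>b'\<in>B. ltrace (a b * b') = (if b = b' then 1 else 0)"
    using dual_family_exists[OF _ B(2)] by blast
  with B \<open>finite B\<close> span_mod_radical_eq_UNIV[OF assms(2) B(3)] show ?thesis
    unfolding trace_dual_basis_def by blast
qed

end

definition casimir :: "'a::real_algebra_1 set \<Rightarrow> ('a \<Rightarrow> 'a) \<Rightarrow> 'a" where
  "casimir B a = (\<Sum>b\<in>B. a b * b)"

context
  assumes fd: "finite_dim_space TYPE('a::real_algebra_1)"
begin

lemma ltrace_mult_span_mod_radical:
  fixes v :: 'a
  assumes "\<And>b. b \<in> B \<Longrightarrow> ltrace (v * b) = 0" "x \<in> span_mod_radical B"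
  shows "ltrace (v * x) = 0"
proof -
  obtain s r where "x = s + r" "s \<in> span B" "r \<in> jacobson_radical"
    using assms(2) unfolding span_mod_radical_def by blast
  have "ltrace (v * s) = 0" using \<open>s \<in> span B\<close>
    by (induction rule: span_induct_alt)
       (simp_all add: assms(1) distrib_left mult_scaleR_right ltrace_add[OF fd] ltrace_scaleR[OF fd])
  moreover have "ltrace (v * r) = 0"
    using \<open>r \<in> jacobson_radical\<close> jacobson_radical_iff_trace'[OF fd] by blast
  ultimately show ?thesis using \<open>x = s + r\<close> by (simp add: distrib_left ltrace_add[OF fd])
qed

context
  fixes B :: "'a set" and a :: "'a \<Rightarrow> 'a"
  assumes dual: "trace_dual_basis B a"
begin

lemma trace_dual_basisD:
  shows "finite B" "span_mod_radical B = UNIV"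
    "\<And>b b'. b \<in> B \<Longrightarrow> b' \<in> B \<Longrightarrow> ltrace (a b * b') = (if b = b' then 1 else 0)"
  using dual unfolding trace_dual_basis_def by auto

lemma sum_mult_ltrace_dual:
  assumes "b' \<in> B"
  shows "(\<Sum>b\<in>B. f b * ltrace (a b * b')) = f b'" and "(\<Sum>b\<in>B. f b * ltrace (a b' * b)) = f b'"
proof -
  have "(\<Sum>b\<in>B. f b * ltrace (a b * b')) = (\<Sum>b\<in>B. f b * (if b = b' then 1 else 0))"
    using assms by (intro sum.cong refl) (simp add: trace_dual_basisD(3))
  then show "(\<Sum>b\<in>B. f b * ltrace (a b * b')) = f b'"
    using sum_mult_delta(1)[OF trace_dual_basisD(1) assms] by simp
  have "(\<Sum>b\<in>B. f b * ltrace (a b' * b)) = (\<Sum>b\<in>B. f b * (if b' = b then 1 else 0))"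
    using assms by (intro sum.cong refl) (simp add: trace_dual_basisD(3))
  then show "(\<Sum>b\<in>B. f b * ltrace (a b' * b)) = f b'"
    using sum_mult_delta(2)[OF trace_dual_basisD(1) assms] by simp
qed

lemma trace_dual_basis_expand_left: "y - (\<Sum>b\<in>B. ltrace (y * b) *\<^sub>R a b) \<in> jacobson_radical"
proof -
  have "ltrace ((y - (\<Sum>b\<in>B. ltrace (y * b) *\<^sub>R a b)) * b')
      = ltrace (y * b') - (\<Sum>b\<in>B. ltrace (y * b) * ltrace (a b * b'))" for b'
    by (simp add: left_diff_distrib sum_distrib_right ltrace_diff[OF fd] ltrace_sum[OF fd]
        ltrace_scaleR[OF fd])
  then have "ltrace ((y - (\<Sum>b\<in>B. ltrace (y * b) *\<^sub>R a b)) * b') = 0" if "b' \<in> B" for b'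
    using sum_mult_ltrace_dual(1)[OF that] by simp
  then have "ltrace ((y - (\<Sum>b\<in>B. ltrace (y * b) *\<^sub>R a b)) * x) = 0" for x
    by (rule ltrace_mult_span_mod_radical) (use trace_dual_basisD(2) in blast)+
  then show ?thesis unfolding jacobson_radical_iff_trace[OF fd] ..
qed

lemma trace_dual_basis_expand_right: "z - (\<Sum>b\<in>B. ltrace (a b * z) *\<^sub>R b) \<in> jacobson_radical"
proof -
  define v where "v = z - (\<Sum>b\<in>B. ltrace (a b * z) *\<^sub>R b)"
  have "ltrace (a b' * v) = ltrace (a b' * z) - (\<Sum>b\<in>B. ltrace (a b * z) * ltrace (a b' * b))" for b'
    by (simp add: v_def right_diff_distrib sum_distrib_left ltrace_diff[OF fd] ltrace_sum[OF fd]
        ltrace_scaleR[OF fd])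
  then have dual_v: "ltrace (a b' * v) = 0" if "b' \<in> B" for b'
    using sum_mult_ltrace_dual(2)[OF that] by simp
  have "ltrace (x * v) = 0" for x
  proof -
    define x' where "x' = x - (\<Sum>b\<in>B. ltrace (x * b) *\<^sub>R a b)"
    have "ltrace ((x' + (\<Sum>b\<in>B. ltrace (x * b) *\<^sub>R a b)) * v)
        = ltrace (x' * v) + (\<Sum>b\<in>B. ltrace (x * b) * ltrace (a b * v))"
      by (simp add: distrib_right sum_distrib_right ltrace_add[OF fd] ltrace_sum[OF fd]
          ltrace_scaleR[OF fd])
    moreover have "ltrace (x' * v) = 0"
      using trace_dual_basis_expand_left[of x] unfolding x'_def jacobson_radical_iff_trace[OF fd] ..
    ultimately show ?thesis using dual_v unfolding x'_def by simp
  qed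
  then show ?thesis unfolding v_def jacobson_radical_iff_trace'[OF fd] ..
qed

lemma bilinear_expand_left:
  fixes \<Phi> :: "'a \<Rightarrow> 'a \<Rightarrow> 'c::real_vector"
  assumes lin: "linear (\<lambda>p. \<Phi> p q)" and vanish: "\<And>p. p \<in> jacobson_radical \<Longrightarrow> \<Phi> p q = 0"
  shows "\<Phi> p q = (\<Sum>b\<in>B. ltrace (p * b) *\<^sub>R \<Phi> (a b) q)"
proof -
  let ?s = "\<Sum>b\<in>B. ltrace (p * b) *\<^sub>R a b"
  have "\<Phi> p q = \<Phi> ((p - ?s) + ?s) q" by simp
  also have "\<dots> = \<Phi> (p - ?s) q + \<Phi> ?s q" by (rule linear_add[OF lin])
  finally show ?thesis
    using vanish[OF trace_dual_basis_expand_left] by (simp add: linear_sum[OF lin] linear_scale[OF lin])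
qed

lemma bilinear_expand_right:
  fixes \<Phi> :: "'a \<Rightarrow> 'a \<Rightarrow> 'c::real_vector"
  assumes lin: "linear (\<lambda>q. \<Phi> p q)" and vanish: "\<And>q. q \<in> jacobson_radical \<Longrightarrow> \<Phi> p q = 0"
  shows "\<Phi> p q = (\<Sum>b\<in>B. ltrace (a b * q) *\<^sub>R \<Phi> p b)"
proof -
  let ?s = "\<Sum>b\<in>B. ltrace (a b * q) *\<^sub>R b"
  have "\<Phi> p q = \<Phi> p ((q - ?s) + ?s)" by simp
  also have "\<dots> = \<Phi> p (q - ?s) + \<Phi> p ?s" by (rule linear_add[OF lin])
  finally show ?thesis
    using vanish[OF trace_dual_basis_expand_right] by (simp add: linear_sum[OF lin] linear_scale[OF lin])
qed

text \<open>The Casimir element is central modulo the radical, in the following bilinear sense.\<close>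

lemma casimir_bilinear_commute:
  fixes \<Phi> :: "'a \<Rightarrow> 'a \<Rightarrow> 'c::real_vector"
  assumes lin1: "\<And>q. linear (\<lambda>p. \<Phi> p q)" and lin2: "\<And>p. linear (\<lambda>q. \<Phi> p q)"
    and vanish1: "\<And>p q. p \<in> jacobson_radical \<Longrightarrow> \<Phi> p q = 0"
    and vanish2: "\<And>p q. q \<in> jacobson_radical \<Longrightarrow> \<Phi> p q = 0"
  shows "(\<Sum>b\<in>B. \<Phi> (x * a b) b) = (\<Sum>b\<in>B. \<Phi> (a b) (b * x))"
proof -
  have "(\<Sum>b\<in>B. \<Phi> (x * a b) b) = (\<Sum>b\<in>B. \<Sum>b'\<in>B. ltrace (x * a b * b') *\<^sub>R \<Phi> (a b') b)"
    by (intro sum.cong refl bilinear_expand_left lin1 vanish1)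
  also have "\<dots> = (\<Sum>b'\<in>B. \<Sum>b\<in>B. ltrace (a b' * (b * x)) *\<^sub>R \<Phi> (a b) b')"
  proof -
    have "ltrace (x * a b * b') = ltrace (a b * (b' * x))" for b b'
      using ltrace_commute[OF fd, of x "a b * b'"] by (simp add: mult.assoc)
    then show ?thesis by simp
  qed
  also have "\<dots> = (\<Sum>b\<in>B. \<Sum>b'\<in>B. ltrace (a b' * (b * x)) *\<^sub>R \<Phi> (a b) b')"
    by (rule sum.swap)
  also have "\<dots> = (\<Sum>b\<in>B. \<Phi> (a b) (b * x))"
    by (intro sum.cong refl bilinear_expand_right[symmetric] lin2 vanish2)
  finally show ?thesis .
qed

end

lemma ltrace_casimir_indep:
  assumes dualB: "trace_dual_basis B a" and dualC: "trace_dual_basis C a'"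
  shows "ltrace (casimir B a * y) = ltrace (casimir C a' * (y::'a))"
proof -
  define \<Phi> where "\<Phi> p q = ltrace (p * (q * y))" for p q
  have lin1: "linear (\<lambda>p. \<Phi> p q)" for q
    unfolding \<Phi>_def by (intro linearI) (simp_all add: distrib_right ltrace_add[OF fd] ltrace_scaleR[OF fd])
  have lin2: "linear (\<lambda>q. \<Phi> p q)" for p
    unfolding \<Phi>_def by (intro linearI) (simp_all add: distrib_left distrib_right ltrace_add[OF fd]
        ltrace_scaleR[OF fd])
  have vanish1: "\<Phi> p q = 0" if "p \<in> jacobson_radical" for p q
    unfolding \<Phi>_def using that jacobson_radical_iff_trace[OF fd] by blast
  have vanish2: "\<Phi> p q = 0" if "q \<in> jacobson_radical" for p q
    unfolding \<Phi>_def using jacobson_radical_mult_right[OF fd that] jacobson_radical_iff_trace'[OF fd]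
    by blast
  have "ltrace (casimir B a * y) = (\<Sum>b\<in>B. \<Phi> (a b) b)"
    unfolding casimir_def \<Phi>_def by (simp add: sum_distrib_right ltrace_sum[OF fd] mult.assoc)
  also have "\<dots> = (\<Sum>b\<in>B. \<Sum>c\<in>C. ltrace (a b * c) *\<^sub>R \<Phi> (a' c) b)"
    by (intro sum.cong refl bilinear_expand_left[OF dualC lin1 vanish1])
  also have "\<dots> = (\<Sum>c\<in>C. \<Sum>b\<in>B. ltrace (a b * c) *\<^sub>R \<Phi> (a' c) b)" by (rule sum.swap)
  also have "\<dots> = (\<Sum>c\<in>C. \<Phi> (a' c) c)"
    by (intro sum.cong refl bilinear_expand_right[OF dualB lin2 vanish2, symmetric])
  also have "\<dots> = ltrace (casimir C a' * y)"
    unfolding casimir_def \<Phi>_def by (simp add: sum_distrib_right ltrace_sum[OF fd] mult.assoc)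
  finally show ?thesis .
qed

end

context
  assumes fd: "finite_dim_space TYPE('a::real_algebra_1)"
begin

lemma mult_idempotent_nonzero_if_not_radical:
  fixes E :: 'a
  assumes span: "span_mod_radical C = UNIV" and idem: "E * E = E" and "E \<notin> jacobson_radical"
  shows "\<exists>c\<in>C. c * E \<noteq> 0"
proof (rule ccontr)
  assume "\<not> (\<exists>c\<in>C. c * E \<noteq> 0)"
  then have killed: "\<forall>c\<in>C. c * E = 0" by blast
  obtain s r where "E = s + r" "s \<in> span C" "r \<in> jacobson_radical"
    using span unfolding span_mod_radical_def by blast
  have "s * E = 0" using \<open>s \<in> span C\<close>
    by (induction rule: span_induct_alt) (simp_all add: killed distrib_right)
  then have "E = r * E" using \<open>E = s + r\<close> idem by (metis add_0 distrib_right)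
  with \<open>r \<in> jacobson_radical\<close> have "E \<in> jacobson_radical"
    using jacobson_radical_mult_right[OF fd] by metis
  with assms(3) show False ..
qed

text \<open>The trace of the Casimir element against \<open>E\<close> does not depend on the dual basis; in one
  adapted to the decomposition \<open>A = A E \<oplus> A (1 - E)\<close> it counts the basis vectors fixed by
  right multiplication with \<open>E\<close>.\<close>

lemma ltrace_casimir_idempotent_pos:
  fixes B :: "'a set" and E :: 'a
  assumes dual: "trace_dual_basis B a" and idem: "E * E = E" and "E \<notin> jacobson_radical"
  shows "ltrace (casimir B a * E) > (0 :: real)"
proof -
  obtain S :: "'a set" where S: "finite S" "span S = UNIV" using fd by (rule finite_dim_spaceE)
  define G where "G = (\<lambda>s. s * E) ` S \<union> (\<lambda>s. s * (1 - E)) ` S"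
  have "s \<in> span G" if "s \<in> S" for s
    using that span_add[of "s * E" G "s * (1 - E)"] span_base[of _ G]
    unfolding G_def by (auto simp: right_diff_distrib)
  then have "span G = UNIV" using S(2) by (metis span_minimal subspace_span top.extremum_uniqueI subsetI)
  moreover have "finite G" unfolding G_def using S(1) by simp
  ultimately obtain C a' where "C \<subseteq> G" and dual': "trace_dual_basis C a'"
    using trace_dual_basis_exists[OF fd] by blast
  have fixed_or_killed: "c * E = c \<or> c * E = 0" if "c \<in> C" for c
    using that \<open>C \<subseteq> G\<close> unfolding G_def by (auto simp: mult.assoc idem left_diff_distrib)
  have diagonal: "ltrace (a' c * (c * E)) = (if c * E = c then 1 else 0)" if "c \<in> C" for c
    using fixed_or_killed[OF that] trace_dual_basisD(3)[OF fd dual' that that] by auto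
  obtain c0 where "c0 \<in> C" "c0 * E = c0"
    using mult_idempotent_nonzero_if_not_radical[OF trace_dual_basisD(2)[OF fd dual'] idem assms(3)]
      fixed_or_killed by blast
  have "ltrace (casimir B a * E) = ltrace (casimir C a' * E)"
    by (rule ltrace_casimir_indep[OF fd dual dual'])
  also have "\<dots> = (\<Sum>c\<in>C. if c * E = c then 1 else 0)"
    unfolding casimir_def
    by (simp add: sum_distrib_right ltrace_sum[OF fd] mult.assoc diagonal cong: sum.cong)
  also have "\<dots> \<ge> 1"
    using member_le_sum[of c0 C "\<lambda>c. if c * E = c then 1 else (0::real)"] \<open>c0 \<in> C\<close> \<open>c0 * E = c0\<close>
      trace_dual_basisD(1)[OF fd dual'] by auto
  finally show ?thesis by linarith
qed

lemma radical_if_mult_casimir_radical: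
  fixes B :: "'a set"
  assumes dual: "trace_dual_basis B a"
  shows "{w::'a. w * casimir B a \<in> jacobson_radical} \<subseteq> jacobson_radical"
proof (rule left_ideal_subset_jacobson_radical)
  show "left_ideal {w::'a. w * casimir B a \<in> jacobson_radical}"
    unfolding left_ideal_def
    by (auto simp: distrib_right mult.assoc jacobson_radical_zero jacobson_radical_add
        intro: jacobson_radical_mult_left)
next
  fix v :: 'a assume v: "v \<in> {w. w * casimir B a \<in> jacobson_radical}"
  obtain n q where "0 < n" "q \<in> polys v" and idem: "(q * v ^ n) * (q * v ^ n) = q * v ^ n"
    and absorb: "v ^ n * (q * v ^ n) = v ^ n"
    using fitting_idempotent[OF fd] by blast
  obtain m where "n = Suc m" using \<open>0 < n\<close> gr0_implies_Suc by blast
  have "(q * v ^ n) * casimir B a = (q * v ^ m) * (v * casimir B a)"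
    by (simp only: \<open>n = Suc m\<close> power_Suc2 mult.assoc)
  then have "(q * v ^ n) * casimir B a \<in> jacobson_radical"
    using v jacobson_radical_mult_left by auto
  then have "ltrace (casimir B a * (q * v ^ n)) = 0"
    using ltrace_jacobson_radical[OF fd] ltrace_commute[OF fd] by metis
  then have "q * v ^ n \<in> jacobson_radical"
    using ltrace_casimir_idempotent_pos[OF dual idem] by fastforce
  then have "v ^ n \<in> jacobson_radical" using absorb jacobson_radical_mult_left by metis
  then show "\<exists>k. v ^ k \<in> jacobson_radical" by blast
qed

lemma casimir_invertible_mod_radical:
  fixes B :: "'a set"
  assumes dual: "trace_dual_basis B a"
  obtains d where "casimir B a * d - 1 \<in> jacobson_radical" "d * casimir B a - 1 \<in> jacobson_radical"
proof -
  define c where "c = casimir B a"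
  obtain n q where q: "q \<in> polys c" and rel: "c ^ n = c ^ Suc n * q"
    using power_relation[OF fd, of c] by blast
  have commute: "c * q = q * c" using polys_commute[OF self_in_polys q] .
  have "(1 - c * q) * c ^ n = c ^ n - c ^ Suc n * q"
    using polys_commute[OF q power_in_polys[of c n]] by (simp add: left_diff_distrib mult.assoc)
  then have annihilates: "(1 - c * q) * c ^ n = 0" using rel by (simp del: power_Suc)
  have "x * c ^ k \<in> jacobson_radical \<Longrightarrow> x \<in> jacobson_radical" for x k
  proof (induction k)
    case (Suc k)
    then have "(x * c ^ k) * c \<in> jacobson_radical" by (simp only: mult.assoc power_Suc2)
    then show ?case using Suc.IH radical_if_mult_casimir_radical[OF dual] unfolding c_def by blast
  qed simp
  then have "1 - c * q \<in> jacobson_radical" using annihilates jacobson_radical_zero by metis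
  then have "c * q - 1 \<in> jacobson_radical" "q * c - 1 \<in> jacobson_radical"
    using jacobson_radical_uminus commute by fastforce+
  then show ?thesis using that unfolding c_def by blast
qed

end

lemma invertible_elem_mult:
  "invertible_elem x \<Longrightarrow> invertible_elem y \<Longrightarrow> invertible_elem (x * y)"
  unfolding invertible_elem_def by (metis mult.assoc mult_1_left)

lemma invertible_elem_if_norm_one_minus_less:
  fixes x :: "'a::{real_normed_algebra_1,banach}"
  assumes "norm (1 - x) < 1"
  shows "invertible_elem x"
proof -
  define z where "z = 1 - x"
  have "norm z < 1" using assms z_def by simp
  define s where "s = (\<Sum>n. z ^ n)"
  have partial: "(\<lambda>N. \<Sum>n<N. z ^ n) \<longlonglongrightarrow> s"
    unfolding s_def using complete_algebra_summable_geometric[OF \<open>norm z < 1\<close>]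
    by (rule summable_LIMSEQ)
  have "(\<lambda>N. 1 - z ^ N) \<longlonglongrightarrow> 1 - 0"
    by (intro tendsto_diff tendsto_const LIMSEQ_power_zero) (use \<open>norm z < 1\<close> in simp)
  moreover have "1 - z = x" unfolding z_def by simp
  then have "(\<lambda>N. x * (\<Sum>n<N. z ^ n)) = (\<lambda>N. 1 - z ^ N)"
    and "(\<lambda>N. (\<Sum>n<N. z ^ n) * x) = (\<lambda>N. 1 - z ^ N)"
    using geometric_sum_mult[of z] by simp_all
  ultimately have "(\<lambda>N. x * (\<Sum>n<N. z ^ n)) \<longlonglongrightarrow> 1" "(\<lambda>N. (\<Sum>n<N. z ^ n) * x) \<longlonglongrightarrow> 1"
    by simp_all
  moreover have "(\<lambda>N. x * (\<Sum>n<N. z ^ n)) \<longlonglongrightarrow> x * s" "(\<lambda>N. (\<Sum>n<N. z ^ n) * x) \<longlonglongrightarrow> s * x"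
    by (intro tendsto_mult tendsto_const partial)+
  ultimately have "x * s = 1" "s * x = 1" using LIMSEQ_unique by blast+
  then show ?thesis unfolding invertible_elem_def by blast
qed

lemma eventually_invertible_elem:
  fixes X :: "nat \<Rightarrow> 'a::{real_normed_algebra_1,banach}"
  assumes "invertible_elem x" "X \<longlonglongrightarrow> x"
  shows "eventually (\<lambda>n. invertible_elem (X n)) sequentially"
proof -
  obtain y where "x * y = 1" "y * x = 1" using assms(1) unfolding invertible_elem_def by blast
  have "(\<lambda>n. y * X n) \<longlonglongrightarrow> y * x" by (intro tendsto_mult tendsto_const assms(2))
  then have "eventually (\<lambda>n. dist (y * X n) 1 < 1) sequentially"
    using \<open>y * x = 1\<close> unfolding tendsto_iff by simp
  then show ?thesis
  proof (rule eventually_mono)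
    fix n assume "dist (y * X n) 1 < 1"
    then have "invertible_elem (y * X n)"
      by (intro invertible_elem_if_norm_one_minus_less) (simp add: dist_norm norm_minus_commute)
    moreover have "X n = x * (y * X n)" using \<open>x * y = 1\<close> by (simp add: mult.assoc[symmetric])
    ultimately show "invertible_elem (X n)" using assms(1) invertible_elem_mult by metis
  qed
qed

lemma closedin_top_of_set_sequentially:
  fixes T :: "'a::metric_space set"
  assumes "T \<subseteq> S" and limits: "\<And>\<sigma> l. (\<forall>n. \<sigma> n \<in> T) \<Longrightarrow> \<sigma> \<longlonglongrightarrow> l \<Longrightarrow> l \<in> S \<Longrightarrow> l \<in> T"
  shows "closedin (top_of_set S) T"
proof -
  have "T = S \<inter> closure T"
    using assms(1) closure_subset limits by (auto simp: closure_sequential)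
  then show ?thesis using closedin_closed by blast
qed

lemma closedin_top_of_set_limit:
  fixes T :: "'a::metric_space set"
  assumes "closedin (top_of_set S) T" "\<forall>n. \<sigma> n \<in> T" "\<sigma> \<longlonglongrightarrow> l" "l \<in> S"
  shows "l \<in> T"
proof -
  obtain C where "closed C" "T = S \<inter> C" using assms(1) closedin_closed by blast
  with assms(2-4) show ?thesis using closed_sequentially[of C] by blast
qed

lemma BAlgD:
  assumes "\<psi> \<in> BAlg"
  shows "blinfun_apply \<psi> (x * y) = blinfun_apply \<psi> x * blinfun_apply \<psi> y" "blinfun_apply \<psi> 1 = 1"
  using assms unfolding BAlg_def by auto

lemma conj_orbitI:
  assumes "invertible_elem w" "\<And>x. blinfun_apply \<psi> x * w = w * blinfun_apply \<phi> x"
  shows "\<psi> \<in> conj_orbit \<phi>"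
proof -
  obtain w' where "w * w' = 1" "w' * w = 1" using assms(1) unfolding invertible_elem_def by blast
  then have "blinfun_apply \<psi> x = w * blinfun_apply \<phi> x * w'" for x
    using assms(2)[of x] by (metis mult.assoc mult_1_right)
  with \<open>w * w' = 1\<close> \<open>w' * w = 1\<close> show ?thesis unfolding conj_orbit_def by blast
qed

lemma conj_orbit_subset_BAlg:
  assumes "\<phi> \<in> BAlg"
  shows "conj_orbit \<phi> \<subseteq> BAlg"
proof
  fix \<psi> assume "\<psi> \<in> conj_orbit \<phi>"
  then obtain u v where uv: "u * v = 1" "v * u = 1" "\<And>x. blinfun_apply \<psi> x = u * blinfun_apply \<phi> x * v"
    unfolding conj_orbit_def by blast
  have "blinfun_apply \<psi> x * blinfun_apply \<psi> y = u * blinfun_apply \<phi> x * (v * u) * blinfun_apply \<phi> y * v"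
    for x y by (simp add: uv(3) mult.assoc)
  then show "\<psi> \<in> BAlg"
    unfolding BAlg_def using uv BAlgD[OF assms] by (simp add: mult.assoc)
qed

text \<open>The averaging trick of separable algebras: summing \<open>\<psi> (a b) u \<phi> b\<close> over a trace dual basis
  turns an arbitrary \<open>u\<close> into an intertwiner of \<open>\<phi>\<close> and \<open>\<psi>\<close>.\<close>

lemma casimir_intertwiner:
  fixes \<phi> \<psi> :: "'a::real_algebra_1 \<Rightarrow> 'b::real_algebra_1"
  assumes fd: "finite_dim_space TYPE('a)" and dual: "trace_dual_basis B a"
    and lin: "linear \<phi>" "linear \<psi>"
    and mult: "\<And>x y. \<phi> (x * y) = \<phi> x * \<phi> y" "\<And>x y. \<psi> (x * y) = \<psi> x * \<psi> y"
    and vanish: "\<And>r. r \<in> jacobson_radical \<Longrightarrow> \<phi> r = 0" "\<And>r. r \<in> jacobson_radical \<Longrightarrow> \<psi> r = 0"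
  shows "\<psi> x * (\<Sum>b\<in>B. \<psi> (a b) * u * \<phi> b) = (\<Sum>b\<in>B. \<psi> (a b) * u * \<phi> b) * \<phi> x"
proof -
  define \<Phi> where "\<Phi> p q = \<psi> p * u * \<phi> q" for p q
  have lin1: "linear (\<lambda>p. \<Phi> p q)" for q
    unfolding \<Phi>_def using linear_compose[OF lin(2) linear_mult_right[of "u * \<phi> q"]]
    by (simp add: o_def mult.assoc)
  have lin2: "linear (\<lambda>q. \<Phi> p q)" for p
    unfolding \<Phi>_def using linear_compose[OF lin(1) linear_mult_left[of "\<psi> p * u"]] by (simp add: o_def)
  have "\<Phi> p q = 0" if "p \<in> jacobson_radical \<or> q \<in> jacobson_radical" for p q
    using that vanish unfolding \<Phi>_def by auto
  then have "(\<Sum>b\<in>B. \<Phi> (x * a b) b) = (\<Sum>b\<in>B. \<Phi> (a b) (b * x))"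
    by (intro casimir_bilinear_commute[OF fd dual lin1 lin2]) simp_all
  then show ?thesis
    unfolding \<Phi>_def by (simp add: sum_distrib_left sum_distrib_right mult mult.assoc)
qed

theorem conj_orbit_closed_if_radical_vanishes:
  fixes \<phi> :: "'a::{real_normed_algebra_1,banach} \<Rightarrow>\<^sub>L 'b::{real_normed_algebra_1,banach}"
  assumes fd: "finite_dim_space TYPE('a)" and \<phi>: "\<phi> \<in> BAlg"
    and vanish: "\<And>r. r \<in> jacobson_radical \<Longrightarrow> blinfun_apply \<phi> r = 0"
  shows "closedin (top_of_set BAlg) (conj_orbit \<phi>)"
proof (rule closedin_top_of_set_sequentially[OF conj_orbit_subset_BAlg[OF \<phi>]])
  fix \<sigma> \<psi> assume orbit: "\<forall>n. \<sigma> n \<in> conj_orbit \<phi>" and lim: "\<sigma> \<longlonglongrightarrow> \<psi>" and \<psi>: "\<psi> \<in> BAlg"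
  have "\<forall>n. \<exists>u v. u * v = 1 \<and> v * u = 1 \<and> (\<forall>x. blinfun_apply (\<sigma> n) x = u * blinfun_apply \<phi> x * v)"
    using orbit unfolding conj_orbit_def by blast
  then obtain U V where UV: "\<And>n. U n * V n = 1" "\<And>n. V n * U n = 1"
    and \<sigma>: "\<And>n x. blinfun_apply (\<sigma> n) x = U n * blinfun_apply \<phi> x * V n"
    by metis
  let ?p = "blinfun_apply \<psi>" and ?f = "blinfun_apply \<phi>"
  have pointwise: "(\<lambda>n. blinfun_apply (\<sigma> n) x) \<longlonglongrightarrow> ?p x" for x
    by (intro blinfun.tendsto lim tendsto_const)
  have \<psi>_vanish: "?p r = 0" if "r \<in> jacobson_radical" for r
  proof -
    have "(\<lambda>n. blinfun_apply (\<sigma> n) r) = (\<lambda>n. 0)" by (simp add: \<sigma> vanish[OF that])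
    then show ?thesis using pointwise[of r] tendsto_const LIMSEQ_unique by metis
  qed
  have lin: "linear ?f" "linear ?p" by (simp_all add: bounded_linear.linear blinfun.bounded_linear_right)
  obtain S :: "'a set" where "finite S" "span S = UNIV" using fd by (rule finite_dim_spaceE)
  then obtain B and a :: "'a \<Rightarrow> 'a" where dual: "trace_dual_basis B a"
    using trace_dual_basis_exists[OF fd] by blast
  obtain d where d: "casimir B a * d - 1 \<in> jacobson_radical" "d * casimir B a - 1 \<in> jacobson_radical"
    by (rule casimir_invertible_mod_radical[OF fd dual])
  have "?p (casimir B a) * ?p d = 1" "?p d * ?p (casimir B a) = 1"
    using \<psi>_vanish[OF d(1)] \<psi>_vanish[OF d(2)] by (simp_all add: blinfun.diff_right BAlgD[OF \<psi>])
  then have "invertible_elem (?p (casimir B a))" unfolding invertible_elem_def by blast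
  moreover have "(\<lambda>n. \<Sum>b\<in>B. ?p (a b) * blinfun_apply (\<sigma> n) b) \<longlonglongrightarrow> ?p (casimir B a)"
    unfolding casimir_def
    by (simp add: blinfun.sum_right BAlgD[OF \<psi>] tendsto_sum tendsto_mult tendsto_const pointwise)
  ultimately have "eventually (\<lambda>n. invertible_elem (\<Sum>b\<in>B. ?p (a b) * blinfun_apply (\<sigma> n) b)) sequentially"
    by (rule eventually_invertible_elem)
  then obtain N where N: "invertible_elem (\<Sum>b\<in>B. ?p (a b) * blinfun_apply (\<sigma> N) b)"
    unfolding eventually_sequentially by blast
  define w where "w = (\<Sum>b\<in>B. ?p (a b) * U N * ?f b)"
  have "w = (\<Sum>b\<in>B. ?p (a b) * blinfun_apply (\<sigma> N) b) * U N"
    unfolding w_def \<sigma> sum_distrib_right using UV(2) by (simp add: mult.assoc)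
  moreover have "invertible_elem (U N)" using UV unfolding invertible_elem_def by blast
  ultimately have "invertible_elem w" using N invertible_elem_mult by simp
  moreover have "?p x * w = w * ?f x" for x
    unfolding w_def
    by (rule casimir_intertwiner[OF fd dual lin BAlgD(1)[OF \<phi>] BAlgD(1)[OF \<psi>] vanish \<psi>_vanish])
  ultimately show "\<psi> \<in> conj_orbit \<phi>" by (rule conj_orbitI)
qed

lemma (in ring) finsum_eq_single:
  assumes "finite A" "j \<in> A" "g j \<in> carrier R" "\<And>l. l \<in> A \<Longrightarrow> l \<noteq> j \<Longrightarrow> g l = \<zero>"
  shows "finsum R g A = g j"
proof -
  have "finsum R g A = (\<Oplus>l\<in>A. if j = l then (\<lambda>_. g j) l else \<zero>)"
  proof (rule finsum_cong')
    show "(\<lambda>l. if j = l then (\<lambda>_. g j) l else \<zero>) \<in> A \<rightarrow> carrier R" using assms(3) by auto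
    show "g l = (if j = l then (\<lambda>_. g j) l else \<zero>)" if "l \<in> A" for l
      using assms(4)[OF that] by auto
  qed simp
  also have "\<dots> = g j" using finsum_singleton[of j A "\<lambda>_. g j"] assms(1-3) by auto
  finally show ?thesis .
qed

lemma (in ring) finsum_eq_zero:
  assumes "\<And>l. l \<in> A \<Longrightarrow> g l = \<zero>"
  shows "finsum R g A = \<zero>"
proof -
  have "finsum R g A = finsum R (\<lambda>_. \<zero>) A"
    using assms by (intro finsum_cong') simp_all
  then show ?thesis by simp
qed

locale mat_prod_repr =
  fixes m :: nat and ns :: "nat \<Rightarrow> nat" and D :: "nat \<Rightarrow> 'b::ring_1 ring"
    and f :: "'b \<Rightarrow> nat \<Rightarrow> nat \<Rightarrow> nat \<Rightarrow> 'b"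
  assumes division: "\<And>i. i < m \<Longrightarrow> division_ring_struct (D i)"
    and bij: "bij_betw f UNIV (mat_prod_carrier m ns D)"
    and add: "\<And>x y. f (x + y) = mat_prod_add m ns D (f x) (f y)"
    and mult: "\<And>x y. f (x * y) = mat_prod_mult m ns D (f x) (f y)"
begin

abbreviation (input) in_range :: "nat \<Rightarrow> nat \<Rightarrow> nat \<Rightarrow> bool" where
  "in_range i j k \<equiv> i < m \<and> j < ns i \<and> k < ns i"

lemma ring_D: "i < m \<Longrightarrow> ring (D i)"
  using division unfolding division_ring_struct_def by blast

lemma carrierD:
  assumes "M \<in> mat_prod_carrier m ns D"
  shows "in_range i j k \<Longrightarrow> M i j k \<in> carrier (D i)" "\<not> in_range i j k \<Longrightarrow> M i j k = undefined"
proof -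
  have "if in_range i j k then M i j k \<in> carrier (D i) else M i j k = undefined"
    using assms unfolding mat_prod_carrier_def by blast
  then show "in_range i j k \<Longrightarrow> M i j k \<in> carrier (D i)" "\<not> in_range i j k \<Longrightarrow> M i j k = undefined"
    by simp_all
qed

lemma f_in_carrier: "f x \<in> mat_prod_carrier m ns D"
  using bij unfolding bij_betw_def by auto

lemma f_zero: "in_range i j k \<Longrightarrow> f 0 i j k = \<zero>\<^bsub>D i\<^esub>"
proof -
  assume r: "in_range i j k"
  interpret R: ring "D i" using ring_D r by blast
  have "f 0 i j k = f 0 i j k \<oplus>\<^bsub>D i\<^esub> f 0 i j k"
    using fun_cong[OF fun_cong[OF fun_cong[OF add[of 0 0]]], of i j k] r
    by (simp add: mat_prod_add_def)
  then show ?thesis using R.add.l_cancel_one' carrierD(1)[OF f_in_carrier r] by blast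
qed

lemma nonzero_entry:
  assumes "x \<noteq> 0"
  obtains i j k where "in_range i j k" "f x i j k \<noteq> \<zero>\<^bsub>D i\<^esub>"
proof -
  have "f x \<noteq> f 0" using assms bij unfolding bij_betw_def by (metis injD)
  then obtain i j k where "f x i j k \<noteq> f 0 i j k" by blast
  moreover have "in_range i j k"
    using calculation carrierD(2)[OF f_in_carrier] by metis
  ultimately show ?thesis using that f_zero by metis
qed

definition unit_mat :: "nat \<Rightarrow> nat \<Rightarrow> nat \<Rightarrow> 'b \<Rightarrow> nat \<Rightarrow> nat \<Rightarrow> nat \<Rightarrow> 'b" where
  "unit_mat i0 q p d = (\<lambda>i j k. if in_range i j k then
     (if i = i0 \<and> j = q \<and> k = p then d else \<zero>\<^bsub>D i\<^esub>) else undefined)"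

context
  fixes i0 q p d
  assumes indices: "i0 < m" "q < ns i0" "p < ns i0" and d: "d \<in> carrier (D i0)"
begin

lemma unit_mat_in_carrier: "unit_mat i0 q p d \<in> mat_prod_carrier m ns D"
  unfolding mat_prod_carrier_def unit_mat_def using d ring_D by (auto simp: ring.ring_simprules)

lemma unit_mat_mult_left:
  assumes M: "M \<in> mat_prod_carrier m ns D"
  shows "mat_prod_mult m ns D (unit_mat i0 q p d) M = (\<lambda>i j k. if in_range i j k then
    (if i = i0 \<and> j = q then d \<otimes>\<^bsub>D i0\<^esub> M i0 p k else \<zero>\<^bsub>D i\<^esub>) else undefined)"
proof (intro ext)
  fix i j k
  show "mat_prod_mult m ns D (unit_mat i0 q p d) M i j k = (if in_range i j k then
      (if i = i0 \<and> j = q then d \<otimes>\<^bsub>D i0\<^esub> M i0 p k else \<zero>\<^bsub>D i\<^esub>) else undefined)"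
  proof (cases "in_range i j k")
    case True
    interpret R: ring "D i" using ring_D True by blast
    have entries: "M i l k \<in> carrier (D i)" if "l < ns i" for l using carrierD(1)[OF M] True that by blast
    have "mat_prod_mult m ns D (unit_mat i0 q p d) M i j k
        = (\<Oplus>\<^bsub>D i\<^esub>l\<in>{..<ns i}. unit_mat i0 q p d i j l \<otimes>\<^bsub>D i\<^esub> M i l k)"
      using True by (simp add: mat_prod_mult_def)
    also have "\<dots> = (if i = i0 \<and> j = q then d \<otimes>\<^bsub>D i0\<^esub> M i0 p k else \<zero>\<^bsub>D i\<^esub>)"
    proof (cases "i = i0 \<and> j = q")
      case True2: True
      then show ?thesis
        using True indices d entries ring_D[OF indices(1)]
        by (subst R.finsum_eq_single[where j = p]) (auto simp: unit_mat_def ring.ring_simprules)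
    qed (use True entries in \<open>auto simp: unit_mat_def intro!: R.finsum_eq_zero\<close>)
    finally show ?thesis using True by simp
  qed (auto simp: mat_prod_mult_def)
qed

lemma unit_mat_mult_right:
  assumes M: "M \<in> mat_prod_carrier m ns D"
  shows "mat_prod_mult m ns D M (unit_mat i0 q p d) = (\<lambda>i j k. if in_range i j k then
    (if i = i0 \<and> k = p then M i0 j q \<otimes>\<^bsub>D i0\<^esub> d else \<zero>\<^bsub>D i\<^esub>) else undefined)"
proof (intro ext)
  fix i j k
  show "mat_prod_mult m ns D M (unit_mat i0 q p d) i j k = (if in_range i j k then
      (if i = i0 \<and> k = p then M i0 j q \<otimes>\<^bsub>D i0\<^esub> d else \<zero>\<^bsub>D i\<^esub>) else undefined)"
  proof (cases "in_range i j k")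
    case True
    interpret R: ring "D i" using ring_D True by blast
    have entries: "M i j l \<in> carrier (D i)" if "l < ns i" for l using carrierD(1)[OF M] True that by blast
    have "mat_prod_mult m ns D M (unit_mat i0 q p d) i j k
        = (\<Oplus>\<^bsub>D i\<^esub>l\<in>{..<ns i}. M i j l \<otimes>\<^bsub>D i\<^esub> unit_mat i0 q p d i l k)"
      using True by (simp add: mat_prod_mult_def)
    also have "\<dots> = (if i = i0 \<and> k = p then M i0 j q \<otimes>\<^bsub>D i0\<^esub> d else \<zero>\<^bsub>D i\<^esub>)"
    proof (cases "i = i0 \<and> k = p")
      case True2: True
      then show ?thesis
        using True indices d entries ring_D[OF indices(1)]
        by (subst R.finsum_eq_single[where j = q]) (auto simp: unit_mat_def ring.ring_simprules)
    qed (use True entries in \<open>auto simp: unit_mat_def intro!: R.finsum_eq_zero\<close>)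
    finally show ?thesis using True by simp
  qed (auto simp: mat_prod_mult_def)
qed

end

text \<open>If \<open>X\<^sub>p\<^sub>q\<close> is a nonzero entry of the block \<open>i0\<close> of \<open>f x\<close>, the matrix unit \<open>u\<close> carrying
  \<open>X\<^sub>p\<^sub>q\<^sup>-\<^sup>1\<close> at position \<open>(q, p)\<close> satisfies \<open>u x u = u\<close>.\<close>

lemma exists_regular_unit:
  fixes x :: 'b
  assumes "x \<noteq> 0"
  shows "\<exists>u. u * x * u = u \<and> u \<noteq> 0"
proof -
  obtain i0 p q where r: "in_range i0 p q" and nz: "f x i0 p q \<noteq> \<zero>\<^bsub>D i0\<^esub>"
    using nonzero_entry[OF assms] by blast
  interpret R: ring "D i0" using ring_D r by blast
  have X: "f x i0 p q \<in> carrier (D i0)" using carrierD(1)[OF f_in_carrier r] .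
  then have unit: "f x i0 p q \<in> Units (D i0)"
    using division r nz unfolding division_ring_struct_def by blast
  define d where "d = inv\<^bsub>D i0\<^esub> (f x i0 p q)"
  have d: "d \<in> carrier (D i0)" "d \<otimes>\<^bsub>D i0\<^esub> f x i0 p q = \<one>\<^bsub>D i0\<^esub>"
    unfolding d_def using unit by auto
  have indices: "i0 < m" "q < ns i0" "p < ns i0" using r by auto
  obtain u where u: "f u = unit_mat i0 q p d"
    using unit_mat_in_carrier[OF indices d(1)] bij unfolding bij_betw_def by (metis UNIV_I f_inv_into_f)
  define UX where "UX = mat_prod_mult m ns D (unit_mat i0 q p d) (f x)"
  have UX_eq: "UX = (\<lambda>i j k. if in_range i j k then
      (if i = i0 \<and> j = q then d \<otimes>\<^bsub>D i0\<^esub> f x i0 p k else \<zero>\<^bsub>D i\<^esub>) else undefined)"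
    unfolding UX_def by (rule unit_mat_mult_left[OF indices d(1) f_in_carrier])
  have "UX \<in> mat_prod_carrier m ns D" unfolding UX_def using mult[of u x] u f_in_carrier by metis
  then have "f (u * x * u) = (\<lambda>i j k. if in_range i j k then
      (if i = i0 \<and> k = p then UX i0 j q \<otimes>\<^bsub>D i0\<^esub> d else \<zero>\<^bsub>D i\<^esub>) else undefined)"
    unfolding mult u UX_def[symmetric] by (rule unit_mat_mult_right[OF indices d(1)])
  also have "\<dots> = unit_mat i0 q p d"
    using indices d X by (auto simp: UX_eq unit_mat_def R.m_assoc intro!: ext)
  finally have "f (u * x * u) = f u" unfolding u .
  then have "u * x * u = u" using u bij unfolding bij_betw_def by (metis injD)
  moreover have "u \<noteq> 0"
  proof
    assume "u = 0"
    then have "unit_mat i0 q p d i0 q p = \<zero>\<^bsub>D i0\<^esub>" using u f_zero r by metis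
    then have "d = \<zero>\<^bsub>D i0\<^esub>" using r unfolding unit_mat_def by simp
    then show False using d(2) division[of i0] r X
      unfolding division_ring_struct_def by simp
  qed
  ultimately show ?thesis by blast
qed

end

lemma semisimple_regular_unit:
  fixes x :: "'b::ring_1"
  assumes "semisimple TYPE('b)" "x \<noteq> 0"
  shows "\<exists>u. u * x * u = u \<and> u \<noteq> 0"
proof -
  obtain m ns and D :: "nat \<Rightarrow> 'b ring" and f where "mat_prod_repr m ns D f"
    using assms(1) unfolding semisimple_def mat_prod_repr_def by blast
  then show ?thesis using mat_prod_repr.exists_regular_unit assms(2) by blast
qed

lemma finite_dimensional_vector_space_scaleR:
  assumes fd: "finite_dim_space TYPE('a::real_vector)"
  obtains Bas :: "'a::real_vector set" where "finite_dimensional_vector_space ((*\<^sub>R) :: real \<Rightarrow> 'a \<Rightarrow> 'a) Bas"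
proof -
  obtain Bas :: "'a set" where "is_basis Bas" using is_basis_exists[OF fd] by blast
  then have "finite_dimensional_vector_space ((*\<^sub>R) :: real \<Rightarrow> 'a \<Rightarrow> 'a) Bas"
    by unfold_locales (auto simp: is_basis_def scaleR_add_right scaleR_add_left dependent_raw_def
        span_raw_def)
  then show ?thesis using that by blast
qed

lemma subspace_range_mult_left: "subspace (range (\<lambda>b. (e::'a::real_algebra_1) * b))"
  by (rule linear_subspace_image[OF linear_mult_left subspace_UNIV])

lemma idempotent_join:
  fixes e e' :: "'a::ring_1"
  assumes e: "e * e = e" and e': "e' * e' = e'" and orth: "e * e' = 0"
  defines "f \<equiv> e + e' - e' * e"
  shows "f * f = f" "f * e = e" "f * e' = e'"
proof -
  have r1: "e * (e * z) = e * z" and r2: "e' * (e' * z) = e' * z" and r3: "e * (e' * z) = 0" for z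
    using e e' orth by (simp_all flip: mult.assoc)
  show "f * f = f" "f * e = e" "f * e' = e'"
    unfolding f_def by (simp_all add: algebra_simps r1 r2 r3 e e' orth)
qed

text \<open>Every right ideal \<open>M\<close> of a finite-dimensional semisimple algebra is \<open>e B\<close> for an idempotent
  \<open>e \<in> M\<close>: take \<open>e\<close> with \<open>e B\<close> of maximal dimension; an element of \<open>M\<close> outside \<open>e B\<close> would
  yield an idempotent \<open>e' \<in> M\<close> orthogonal to \<open>e\<close>, and the join of \<open>e\<close> and \<open>e'\<close> would be larger.\<close>

lemma right_ideal_eq_idempotent_mult:
  fixes M :: "'b::real_algebra_1 set"
  assumes fd: "finite_dim_space TYPE('b)" and ss: "semisimple TYPE('b)"
    and M: "subspace M" and right_ideal: "\<And>m b. m \<in> M \<Longrightarrow> m * b \<in> M"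
  shows "\<exists>e\<in>M. e * e = e \<and> M = range (\<lambda>b. e * b)"
proof -
  obtain Bas :: "'b set" where "finite_dimensional_vector_space ((*\<^sub>R) :: real \<Rightarrow> 'b \<Rightarrow> 'b) Bas"
    using finite_dimensional_vector_space_scaleR[OF fd] by blast
  then interpret F: finite_dimensional_vector_space "(*\<^sub>R) :: real \<Rightarrow> 'b \<Rightarrow> 'b" Bas
    rewrites "module.dependent (*\<^sub>R) = dependent" and "module.span (*\<^sub>R) = span"
      and "module.subspace (*\<^sub>R) = subspace" and "vector_space.dim (*\<^sub>R) = dim"
    by (simp_all add: dependent_raw_def span_raw_def subspace_raw_def dim_raw_def)
  define P where "P e \<longleftrightarrow> e \<in> M \<and> e * e = e" for e :: 'b
  define g where "g e = dim (range (\<lambda>b. e * b))" for e :: 'b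
  have "P 0" unfolding P_def using M by (simp add: subspace_0)
  moreover have "\<forall>y. P y \<longrightarrow> g y < Suc F.dimension"
    unfolding g_def using F.dim_subset_UNIV by (metis le_imp_less_Suc)
  ultimately obtain e where "P e" and e_max: "\<And>y. P y \<Longrightarrow> g y \<le> g e"
    using ex_has_greatest_nat[of P 0 g "Suc F.dimension"] by blast
  then have "e \<in> M" and idem: "e * e = e" unfolding P_def by auto
  have "M \<subseteq> range (\<lambda>b. e * b)"
  proof
    fix x assume "x \<in> M"
    show "x \<in> range (\<lambda>b. e * b)"
    proof (rule ccontr)
      assume "x \<notin> range (\<lambda>b. e * b)"
      define x' where "x' = x - e * x"
      have "x' \<in> M" unfolding x'_def using subspace_diff[OF M \<open>x \<in> M\<close> right_ideal[OF \<open>e \<in> M\<close>]] .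
      have "x' \<noteq> 0" using \<open>x \<notin> range (\<lambda>b. e * b)\<close> unfolding x'_def by auto
      have "e * x' = 0" unfolding x'_def by (simp add: right_diff_distrib idem flip: mult.assoc)
      obtain u where u: "u * x' * u = u" "u \<noteq> 0"
        using semisimple_regular_unit[OF ss \<open>x' \<noteq> 0\<close>] by blast
      define e' where "e' = x' * u"
      have "e' \<in> M" unfolding e'_def using right_ideal[OF \<open>x' \<in> M\<close>] .
      have "e' * e' = e'" unfolding e'_def using u(1) by (simp add: mult.assoc)
      have "e * e' = 0" unfolding e'_def using \<open>e * x' = 0\<close> by (simp flip: mult.assoc)
      have "e' \<noteq> 0" unfolding e'_def using u by (metis mult.assoc mult_zero_right)
      define f where "f = e + e' - e' * e"
      note join = idempotent_join[OF idem \<open>e' * e' = e'\<close> \<open>e * e' = 0\<close>, folded f_def]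
      have "P f"
        unfolding P_def f_def using M \<open>e \<in> M\<close> \<open>e' \<in> M\<close> right_ideal[OF \<open>e' \<in> M\<close>] join(1)
        by (auto intro: subspace_diff subspace_add simp: f_def)
      have "range (\<lambda>b. e * b) \<subseteq> range (\<lambda>b. f * b)"
        using join(2) by (metis (no_types, lifting) image_subset_iff mult.assoc rangeI)
      moreover have "e' \<in> range (\<lambda>b. f * b) - range (\<lambda>b. e * b)"
        using join(3) \<open>e * e' = 0\<close> \<open>e' \<noteq> 0\<close> idem
        by (auto simp: mult.assoc[symmetric]) (metis mult.assoc rangeI)
      ultimately have "span (range (\<lambda>b. e * b)) \<subset> span (range (\<lambda>b. f * b))"
        using span_eq_iff subspace_range_mult_left by (metis Diff_iff psubsetI)
      then have "g e < g f" unfolding g_def by (rule F.dim_psubset)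
      with e_max[OF \<open>P f\<close>] show False by simp
    qed
  qed
  moreover have "range (\<lambda>b. e * b) \<subseteq> M" using right_ideal \<open>e \<in> M\<close> by auto
  ultimately show ?thesis using \<open>e \<in> M\<close> idem by blast
qed

context
  fixes \<phi> :: "'a::ring_1 \<Rightarrow> 'b::ring_1"
  assumes add: "\<And>x y. \<phi> (x + y) = \<phi> x + \<phi> y" and mult: "\<And>x y. \<phi> (x * y) = \<phi> x * \<phi> y"
    and one: "\<phi> 1 = 1"
begin

lemma radical_combination_remove:
  assumes "finite G" "g \<notin> G" and k: "\<forall>h\<in>insert g G. k h \<in> jacobson_radical"
    and g: "g = (\<Sum>h\<in>insert g G. \<phi> (k h) * h)"
  shows "\<exists>k'. (\<forall>h\<in>G. k' h \<in> jacobson_radical) \<and> g = (\<Sum>h\<in>G. \<phi> (k' h) * h)"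
proof -
  obtain w where w: "w * (1 - k g) = 1"
    using one_minus_jacobson_radical_invertible k unfolding invertible_elem_def by blast
  have "\<phi> (1 - k g) + \<phi> (k g) = 1" using add[of "1 - k g" "k g"] one by simp
  then have "\<phi> (1 - k g) = 1 - \<phi> (k g)" by (simp add: eq_diff_eq)
  then have "\<phi> (1 - k g) * g = g - \<phi> (k g) * g" by (simp add: left_diff_distrib)
  also have "\<dots> = (\<Sum>h\<in>G. \<phi> (k h) * h)" using g assms(1,2) by (simp add: algebra_simps)
  finally have "\<phi> w * (\<phi> (1 - k g) * g) = (\<Sum>h\<in>G. \<phi> (w * k h) * h)"
    by (simp add: sum_distrib_left mult mult.assoc)
  moreover have "\<phi> w * (\<phi> (1 - k g) * g) = g" using w one by (simp flip: mult mult.assoc)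
  moreover have "\<forall>h\<in>G. w * k h \<in> jacobson_radical" using k jacobson_radical_mult_left by blast
  ultimately show ?thesis by (intro exI[of _ "\<lambda>h. w * k h"]) simp
qed

text \<open>Nakayama's lemma for the finitely generated \<open>\<phi> (rad A)\<close>-module spanned by \<open>G\<close>.\<close>

lemma nakayama_radical:
  assumes "finite G"
    and "\<forall>g\<in>G. \<exists>k. (\<forall>h\<in>G. k h \<in> jacobson_radical) \<and> g = (\<Sum>h\<in>G. \<phi> (k h) * h)"
  shows "G \<subseteq> {0}"
  using assms
proof (induction G rule: finite_induct)
  case (insert g G)
  obtain k where k: "\<forall>h\<in>insert g G. k h \<in> jacobson_radical"
    and "g = (\<Sum>h\<in>insert g G. \<phi> (k h) * h)"
    using bspec[OF insert.prems insertI1] by blast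
  then obtain k0 where k0: "\<forall>h\<in>G. k0 h \<in> jacobson_radical" and g: "g = (\<Sum>h\<in>G. \<phi> (k0 h) * h)"
    using radical_combination_remove[OF insert.hyps k] by blast
  have "\<exists>k. (\<forall>h\<in>G. k h \<in> jacobson_radical) \<and> g2 = (\<Sum>h\<in>G. \<phi> (k h) * h)" if g2: "g2 \<in> G" for g2
  proof -
    obtain k2 where k2: "\<forall>h\<in>insert g G. k2 h \<in> jacobson_radical"
      and "g2 = (\<Sum>h\<in>insert g G. \<phi> (k2 h) * h)"
      using bspec[OF insert.prems insertI2[OF g2]] by blast
    then have "g2 = \<phi> (k2 g) * g + (\<Sum>h\<in>G. \<phi> (k2 h) * h)" using insert.hyps by simp
    also have "\<phi> (k2 g) * g = (\<Sum>h\<in>G. \<phi> (k2 g * k0 h) * h)"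
      by (subst g) (simp add: sum_distrib_left mult mult.assoc)
    finally have "g2 = (\<Sum>h\<in>G. \<phi> (k2 g * k0 h + k2 h) * h)"
      by (simp add: add distrib_right sum.distrib)
    moreover have "\<forall>h\<in>G. k2 g * k0 h + k2 h \<in> jacobson_radical"
      using k0 k2 by (auto intro: jacobson_radical_add jacobson_radical_mult_left)
    ultimately show ?thesis by (intro exI[of _ "\<lambda>h. k2 g * k0 h + k2 h"]) simp
  qed
  then have "G \<subseteq> {0}" using insert.IH by blast
  then have "(\<Sum>h\<in>G. \<phi> (k0 h) * h) = 0" by (intro sum.neutral) auto
  with g have "g = 0" by simp
  with \<open>G \<subseteq> {0}\<close> show ?case by blast
qed simp

end

lemma nakayama_radical_span:
  fixes \<phi> :: "'a::real_algebra_1 \<Rightarrow> 'b::real_algebra_1"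
  assumes lin: "linear \<phi>" and mult: "\<And>x y. \<phi> (x * y) = \<phi> x * \<phi> y" and one: "\<phi> 1 = 1"
    and "finite G" and gen: "G \<subseteq> span {\<phi> j * m | j m. j \<in> jacobson_radical \<and> m \<in> span G}"
  shows "G \<subseteq> {0}"
proof (rule nakayama_radical[OF linear_add[OF lin] mult one \<open>finite G\<close>], intro ballI)
  fix g assume "g \<in> G"
  then have "g \<in> span {\<phi> j * m | j m. j \<in> jacobson_radical \<and> m \<in> span G}" using gen by blast
  then show "\<exists>k. (\<forall>h\<in>G. k h \<in> jacobson_radical) \<and> g = (\<Sum>h\<in>G. \<phi> (k h) * h)"
  proof (induction rule: span_induct_alt)
    case base
    show ?case by (intro exI[of _ "\<lambda>h. 0"]) (simp add: jacobson_radical_zero linear_0[OF lin])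
  next
    case (step c x y)
    obtain k where k: "\<forall>h\<in>G. k h \<in> jacobson_radical" "y = (\<Sum>h\<in>G. \<phi> (k h) * h)"
      using step.IH by blast
    obtain j m where "x = \<phi> j * m" "j \<in> jacobson_radical" "m \<in> span G" using step.hyps by blast
    then obtain \<mu> where "m = (\<Sum>h\<in>G. \<mu> h *\<^sub>R h)" using span_finite[OF \<open>finite G\<close>] by auto
    define k' where "k' h = c *\<^sub>R (\<mu> h *\<^sub>R j) + k h" for h
    have "c *\<^sub>R x + y = (\<Sum>h\<in>G. \<phi> (k' h) * h)"
      unfolding k'_def \<open>x = \<phi> j * m\<close> \<open>m = (\<Sum>h\<in>G. \<mu> h *\<^sub>R h)\<close> k(2)
      by (simp add: sum_distrib_left sum.distrib linear_add[OF lin] linear_scale[OF lin] distrib_right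
          scaleR_sum_right mult_scaleR_left mult_scaleR_right)
    moreover have "\<forall>h\<in>G. k' h \<in> jacobson_radical"
      unfolding k'_def using k(1) \<open>j \<in> jacobson_radical\<close>
      by (auto intro!: jacobson_radical_add jacobson_radical_scaleR)
    ultimately show ?case by blast
  qed
qed

lemma subspace_eq_if_invertible_image_subset:
  fixes M M' :: "'b::real_algebra_1 set"
  assumes fd: "finite_dim_space TYPE('b)" and "subspace M" "subspace M'" "M' \<subseteq> M"
    and "invertible_elem u" "(\<lambda>m. u * m) ` M \<subseteq> M'"
  shows "M' = M"
proof -
  obtain Bas :: "'b set" where "finite_dimensional_vector_space ((*\<^sub>R) :: real \<Rightarrow> 'b \<Rightarrow> 'b) Bas"
    using finite_dimensional_vector_space_scaleR[OF fd] by blast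
  then interpret F: finite_dimensional_vector_space "(*\<^sub>R) :: real \<Rightarrow> 'b \<Rightarrow> 'b" Bas
    rewrites "module.dependent (*\<^sub>R) = dependent" and "module.span (*\<^sub>R) = span"
      and "module.subspace (*\<^sub>R) = subspace" and "vector_space.dim (*\<^sub>R) = dim"
    by (simp_all add: dependent_raw_def span_raw_def subspace_raw_def dim_raw_def)
  obtain v where "v * u = 1" using assms(5) unfolding invertible_elem_def by blast
  have inj: "inj_on (\<lambda>m. u * m) S" for S
  proof (rule inj_onI)
    fix x y assume "u * x = u * y"
    then have "(v * u) * x = (v * u) * y" by (simp add: mult.assoc)
    with \<open>v * u = 1\<close> show "x = y" by simp
  qed
  obtain BM where BM: "BM \<subseteq> M" "independent BM" "M \<subseteq> span BM" "card BM = dim M"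
    using real_vector.basis_exists[of M] by blast
  have "(\<lambda>m. u * m) ` BM \<subseteq> M'" using assms(6) BM(1) by blast
  moreover have "independent ((\<lambda>m. u * m) ` BM)"
    using real_vector.linear_independent_injective_image[OF linear_mult_left BM(2) inj] .
  ultimately have "card ((\<lambda>m. u * m) ` BM) \<le> dim M'" by (rule F.independent_card_le_dim)
  then have "dim M \<le> dim M'" using card_image[OF inj] BM(4) by simp
  then show ?thesis by (rule F.subspace_dim_equal[OF assms(3,2,4)])
qed

definition diag_part :: "'b::real_normed_algebra_1 \<Rightarrow> ('a::real_normed_vector \<Rightarrow>\<^sub>L 'b) \<Rightarrow> ('a \<Rightarrow>\<^sub>L 'b)" where
  "diag_part e \<phi> = Blinfun (\<lambda>x. e * blinfun_apply \<phi> x * e + (1 - e) * blinfun_apply \<phi> x * (1 - e))"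

definition offdiag_part :: "'b::real_normed_algebra_1 \<Rightarrow> ('a::real_normed_vector \<Rightarrow>\<^sub>L 'b) \<Rightarrow> ('a \<Rightarrow>\<^sub>L 'b)" where
  "offdiag_part e \<phi> = Blinfun (\<lambda>x. e * blinfun_apply \<phi> x * (1 - e))"

lemma bounded_linear_sandwich:
  fixes \<phi> :: "'a::real_normed_vector \<Rightarrow>\<^sub>L 'b::real_normed_algebra"
  shows "bounded_linear (\<lambda>x. c * blinfun_apply \<phi> x * d)"
  using bounded_linear_compose[OF bounded_linear_mult_left[of d]
      bounded_linear_compose[OF bounded_linear_mult_right[of c] blinfun.bounded_linear_right[of \<phi>]]]
  by simp

lemma diag_part_apply:
  "blinfun_apply (diag_part e \<phi>) x = e * blinfun_apply \<phi> x * e + (1 - e) * blinfun_apply \<phi> x * (1 - e)"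
  unfolding diag_part_def by (simp add: bounded_linear_Blinfun_apply bounded_linear_add bounded_linear_sandwich)

lemma offdiag_part_apply: "blinfun_apply (offdiag_part e \<phi>) x = e * blinfun_apply \<phi> x * (1 - e)"
  unfolding offdiag_part_def by (simp add: bounded_linear_Blinfun_apply bounded_linear_sandwich)

context
  fixes e :: "'b::real_algebra_1"
  assumes idem: "e * e = e"
begin

lemma idempotent_complement: "e * (1 - e) = 0" "(1 - e) * e = 0" "(1 - e) * (1 - e) = 1 - e"
  by (simp_all add: algebra_simps idem)

lemma corner_mult:
  assumes x: "(1 - e) * x * e = 0" and y: "(1 - e) * y * e = 0"
  shows "e * (x * y) * e + (1 - e) * (x * y) * (1 - e) =
    (e * x * e + (1 - e) * x * (1 - e)) * (e * y * e + (1 - e) * y * (1 - e))"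
proof -
  define a where "a = 1 - e"
  have r1: "e * (e * z) = e * z" and r2: "e * (a * z) = 0" and r3: "a * (e * z) = 0"
    and r4: "a * (a * z) = a * z" for z
    using idempotent_complement idem unfolding a_def by (simp_all flip: mult.assoc)
  have x': "a * (x * (e * z)) = 0" and y': "a * (y * (e * z)) = 0" for z
    using x y unfolding a_def by (metis mult.assoc mult_zero_left)+
  have xy: "x * y = x * (e * y) + x * (a * y)"
    unfolding a_def by (simp add: algebra_simps)
  have "e * (x * y) * e + a * (x * y) * a = e * (x * (e * (y * e))) + a * (x * (a * (y * a)))"
    unfolding xy by (simp add: distrib_left distrib_right mult.assoc r1 r2 r3 r4 x' y'
        x'[of 1, simplified] y'[of 1, simplified])
  also have "\<dots> = (e * x * e + a * x * a) * (e * y * e + a * y * a)"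
    by (simp add: distrib_left distrib_right mult.assoc r1 r2 r3 r4 x' y'
        x'[of 1, simplified] y'[of 1, simplified])
  finally show ?thesis unfolding a_def .
qed

lemma corner_conj:
  assumes upper: "(1 - e) * y * e = 0" and "t * s = 1"
  shows "((1 - e) + t *\<^sub>R e) * y * ((1 - e) + s *\<^sub>R e)
    = e * y * e + (1 - e) * y * (1 - e) + t *\<^sub>R (e * y * (1 - e))"
proof -
  have "((1 - e) + t *\<^sub>R e) * y * ((1 - e) + s *\<^sub>R e) = (1 - e) * y * (1 - e)
      + s *\<^sub>R ((1 - e) * y * e) + t *\<^sub>R (e * y * (1 - e)) + (t * s) *\<^sub>R (e * y * e)"
    by (simp add: algebra_simps)
  then show ?thesis using assms by simp
qed

lemma corner_scaling_inverse:
  assumes "t * s = 1"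
  shows "((1 - e) + t *\<^sub>R e) * ((1 - e) + s *\<^sub>R e) = 1"
proof -
  have "((1 - e) + t *\<^sub>R e) * ((1 - e) + s *\<^sub>R e) = (1 - e) * (1 - e)
      + s *\<^sub>R ((1 - e) * e) + t *\<^sub>R (e * (1 - e)) + (t * s) *\<^sub>R (e * e)"
    by (simp add: algebra_simps)
  then show ?thesis using assms idempotent_complement idem by simp
qed

end

context
  fixes \<phi> :: "'a::real_normed_algebra_1 \<Rightarrow>\<^sub>L 'b::{real_normed_algebra_1,banach}" and e :: 'b
  assumes \<phi>: "\<phi> \<in> BAlg" and idem: "e * e = e"
    and upper: "\<And>x. (1 - e) * blinfun_apply \<phi> x * e = 0"
begin

lemma diag_part_BAlg: "diag_part e \<phi> \<in> BAlg"
proof (unfold BAlg_def, intro CollectI conjI allI)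
  show "blinfun_apply (diag_part e \<phi>) (x * y) = blinfun_apply (diag_part e \<phi>) x * blinfun_apply (diag_part e \<phi>) y"
    for x y unfolding diag_part_apply BAlgD[OF \<phi>] by (rule corner_mult[OF idem upper upper])
  show "blinfun_apply (diag_part e \<phi>) 1 = 1"
    unfolding diag_part_apply BAlgD[OF \<phi>] by (simp add: idempotent_complement[OF idem] idem)
qed

text \<open>Conjugating by \<open>(1 - e) + t e\<close> scales the upper-right corner of \<open>\<phi>\<close> by \<open>t\<close>, so the
  block-diagonal part of \<open>\<phi>\<close> lies in the closure of its orbit.\<close>

lemma diag_part_in_conj_orbit:
  assumes closed: "closedin (top_of_set BAlg) (conj_orbit \<phi>)"
  shows "diag_part e \<phi> \<in> conj_orbit \<phi>"
proof (rule closedin_top_of_set_limit[OF closed _ _ diag_part_BAlg])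
  define \<sigma> where "\<sigma> n = diag_part e \<phi> + inverse (real (Suc n)) *\<^sub>R offdiag_part e \<phi>" for n
  have "\<sigma> \<longlonglongrightarrow> diag_part e \<phi> + 0 *\<^sub>R offdiag_part e \<phi>"
    unfolding \<sigma>_def by (intro tendsto_add tendsto_const tendsto_scaleR LIMSEQ_inverse_real_of_nat)
  then show "\<sigma> \<longlonglongrightarrow> diag_part e \<phi>" by simp
  show "\<forall>n. \<sigma> n \<in> conj_orbit \<phi>"
  proof
    fix n
    define t :: real where "t = inverse (real (Suc n))"
    have ts: "t * real (Suc n) = 1" unfolding t_def by simp
    have "blinfun_apply (\<sigma> n) x
        = ((1 - e) + t *\<^sub>R e) * blinfun_apply \<phi> x * ((1 - e) + real (Suc n) *\<^sub>R e)" for x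
      unfolding corner_conj[OF idem upper ts] \<sigma>_def t_def[symmetric] plus_blinfun.rep_eq
        scaleR_blinfun.rep_eq diag_part_apply offdiag_part_apply ..
    moreover have "((1 - e) + t *\<^sub>R e) * ((1 - e) + real (Suc n) *\<^sub>R e) = 1"
      "((1 - e) + real (Suc n) *\<^sub>R e) * ((1 - e) + t *\<^sub>R e) = 1"
      using corner_scaling_inverse[OF idem] ts by (simp_all add: mult.commute)
    ultimately show "\<sigma> n \<in> conj_orbit \<phi>" unfolding conj_orbit_def by blast
  qed
qed

end

lemma diag_part_radical_mult:
  fixes \<phi> :: "'a::real_normed_algebra_1 \<Rightarrow>\<^sub>L 'b::real_normed_algebra_1"
  assumes idem: "e * e = e" and M: "M = range (\<lambda>b. e * b)"
    and image: "\<And>b. \<phi> j * b \<in> M"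
  shows "blinfun_apply (diag_part e \<phi>) j * c = blinfun_apply \<phi> j * (e * c)"
proof -
  have fixed: "e * z = z" if "z \<in> M" for z using that idem unfolding M by (auto simp flip: mult.assoc)
  have "(1 - e) * blinfun_apply \<phi> j * (1 - e) = 0"
    using fixed[OF image[of "1 - e"]] by (simp add: left_diff_distrib mult.assoc)
  moreover have "e * (blinfun_apply \<phi> j * (e * c)) = blinfun_apply \<phi> j * (e * c)"
    using fixed[OF image] .
  ultimately show ?thesis
    by (simp add: diag_part_apply distrib_right mult.assoc)
qed

theorem radical_vanishes_if_conj_orbit_closed:
  fixes \<phi> :: "'a::{real_normed_algebra_1,banach} \<Rightarrow>\<^sub>L 'b::{real_normed_algebra_1,banach}"
  assumes fd: "finite_dim_space TYPE('b)" and ss: "semisimple TYPE('b)" and \<phi>: "\<phi> \<in> BAlg"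
    and closed: "closedin (top_of_set BAlg) (conj_orbit \<phi>)" and "j \<in> jacobson_radical"
  shows "blinfun_apply \<phi> j = 0"
proof -
  let ?f = "blinfun_apply \<phi>"
  have lin: "linear ?f" by (simp add: bounded_linear.linear blinfun.bounded_linear_right)
  define X where "X = {?f j * b | j b. j \<in> (jacobson_radical :: 'a set)}"
  define M where "M = span X"
  have right_ideal: "m * c \<in> M" if "m \<in> M" for m c
  proof -
    have "(\<lambda>m. m * c) ` X \<subseteq> X"
    proof (rule image_subsetI)
      fix x assume "x \<in> X"
      then obtain j b where "x = ?f j * b" "j \<in> jacobson_radical" unfolding X_def by blast
      then show "x * c \<in> X" unfolding X_def by (metis (mono_tags, lifting) mem_Collect_eq mult.assoc)
    qed
    then have "span ((\<lambda>m. m * c) ` X) \<subseteq> M" unfolding M_def by (rule span_mono)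
    moreover have "m * c \<in> span ((\<lambda>m. m * c) ` X)"
      using that unfolding M_def span_linear_image[OF linear_mult_right] by blast
    ultimately show ?thesis by blast
  qed
  have left_invariant: "?f a * m \<in> M" if "m \<in> M" for a m
  proof -
    have "(\<lambda>m. ?f a * m) ` X \<subseteq> X"
    proof (rule image_subsetI)
      fix x assume "x \<in> X"
      then obtain j b where "x = ?f j * b" "j \<in> jacobson_radical" unfolding X_def by blast
      then have "?f a * x = ?f (a * j) * b" "a * j \<in> jacobson_radical"
        by (simp_all add: BAlgD[OF \<phi>] mult.assoc jacobson_radical_mult_left)
      then show "?f a * x \<in> X" unfolding X_def by blast
    qed
    then have "span ((\<lambda>m. ?f a * m) ` X) \<subseteq> M" unfolding M_def by (rule span_mono)
    moreover have "?f a * m \<in> span ((\<lambda>m. ?f a * m) ` X)"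
      using that unfolding M_def span_linear_image[OF linear_mult_left] by blast
    ultimately show ?thesis by blast
  qed
  have "subspace M" unfolding M_def by (rule subspace_span)
  have radical_image: "?f j * b \<in> M" if "j \<in> jacobson_radical" for j b
    unfolding M_def X_def by (rule span_base) (use that in blast)
  obtain e where "e \<in> M" and idem: "e * e = e" and M_eq: "M = range (\<lambda>b. e * b)"
    using right_ideal_eq_idempotent_mult[OF fd ss \<open>subspace M\<close> right_ideal] by blast
  have fixed: "e * z = z" if "z \<in> M" for z using that idem unfolding M_eq by (auto simp flip: mult.assoc)
  have upper: "(1 - e) * ?f a * e = 0" for a
    using fixed[OF left_invariant[OF \<open>e \<in> M\<close>]] by (simp add: left_diff_distrib mult.assoc)
  obtain u v where uv: "u * v = 1" "v * u = 1"
    and conj: "\<And>x. blinfun_apply (diag_part e \<phi>) x = u * ?f x * v"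
    using diag_part_in_conj_orbit[OF \<phi> idem upper closed] unfolding conj_orbit_def by blast
  define M' where "M' = span {?f j * m | j m. j \<in> (jacobson_radical :: 'a set) \<and> m \<in> M}"
  have "{?f j * m | j m. j \<in> jacobson_radical \<and> m \<in> M} \<subseteq> M" using left_invariant by blast
  then have "M' \<subseteq> M" unfolding M'_def using \<open>subspace M\<close> by (rule span_minimal)
  have "(\<lambda>m. u * m) ` M \<subseteq> M'"
  proof -
    have "u * (?f j * b) \<in> M'" if "j \<in> jacobson_radical" for j b
    proof -
      have "blinfun_apply (diag_part e \<phi>) j * (u * b) = u * ?f j * (v * u) * b"
        by (simp add: conj mult.assoc)
      then have "u * (?f j * b) = blinfun_apply (diag_part e \<phi>) j * (u * b)"
        using uv(2) by (simp add: mult.assoc)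
      also have "\<dots> = ?f j * (e * (u * b))"
        using diag_part_radical_mult[OF idem M_eq radical_image[OF that]] .
      finally have eq: "u * (?f j * b) = ?f j * (e * (u * b))" .
      have "e * (u * b) \<in> M" unfolding M_eq by (rule rangeI)
      then have "u * (?f j * b) \<in> {?f j * m | j m. j \<in> jacobson_radical \<and> m \<in> M}"
        unfolding eq using that by blast
      then show ?thesis unfolding M'_def by (rule span_base)
    qed
    then have "(\<lambda>m. u * m) ` X \<subseteq> M'" unfolding X_def by blast
    then have "span ((\<lambda>m. u * m) ` X) \<subseteq> M'" unfolding M'_def by (rule span_minimal[OF _ subspace_span])
    then show ?thesis unfolding M_def span_linear_image[OF linear_mult_left] .
  qed
  moreover have "invertible_elem u" using uv unfolding invertible_elem_def by blast
  moreover have "subspace M'" unfolding M'_def by (rule subspace_span)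
  ultimately have "M' = M"
    using subspace_eq_if_invertible_image_subset[OF fd \<open>subspace M\<close> _ \<open>M' \<subseteq> M\<close>] by blast
  obtain S :: "'b set" where "finite S" "span S = UNIV" using fd by (rule finite_dim_spaceE)
  define G where "G = (\<lambda>s. e * s) ` S"
  have "finite G" unfolding G_def using \<open>finite S\<close> by simp
  have "span G = M"
    unfolding G_def span_linear_image[OF linear_mult_left] \<open>span S = UNIV\<close> M_eq ..
  then have "G \<subseteq> M" using span_superset by blast
  then have "G \<subseteq> span {?f j * m | j m. j \<in> jacobson_radical \<and> m \<in> span G}"
    using \<open>M' = M\<close> unfolding M'_def \<open>span G = M\<close> by simp
  then have "G \<subseteq> {0}" by (rule nakayama_radical_span[OF lin BAlgD[OF \<phi>] \<open>finite G\<close>])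
  then have "M \<subseteq> {0}"
    using span_mono[OF \<open>G \<subseteq> {0}\<close>] \<open>span G = M\<close> by (simp add: span_insert_0 span_empty)
  with radical_image[OF \<open>j \<in> jacobson_radical\<close>, of 1] show ?thesis by auto
qed

theorem proposition4p7:
  fixes \<phi> :: "'a::{real_normed_algebra_1,banach} \<Rightarrow>\<^sub>L 'b::{real_normed_algebra_1,banach}"
  assumes "finite_dim_space TYPE('a)"
    and "\<phi> \<in> BAlg"
  shows "(blinfun_apply \<phi> ` jacobson_radical \<subseteq> {0}
            \<longrightarrow> closedin (top_of_set BAlg) (conj_orbit \<phi>))
       \<and> (finite_dim_space TYPE('b) \<and> semisimple TYPE('b)
            \<and> closedin (top_of_set BAlg) (conj_orbit \<phi>)
            \<longrightarrow> blinfun_apply \<phi> ` jacobson_radical \<subseteq> {0})"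
  using conj_orbit_closed_if_radical_vanishes[OF assms] radical_vanishes_if_conj_orbit_closed[OF _ _ assms(2)]
  by blast

end
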